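(* Let $A\in\mathcal{C}^{n\times n}$ be diagonalizable with eigenvalues $\nu_1,\dots,\nu_n\in\mathcal{R}$ (with multiplicity) that are at most finite and satisfy $$1=\nu_1[0]>|\nu_2[0]|\ge\dots\ge|\nu_n[0]|.$$ Let $\mathbf x\in\mathcal{C}^n$ be written as $\mathbf x=\mathbf w_1+\dots+\mathbf w_n$ with $A\mathbf w_j=\nu_j\mathbf w_j$, and assume (i) all $\mathbf w_j$ have at most finite entries and (ii) $\mathbf w_1[0]\neq\mathbf 0$. Then for $\mathbf x_k:=A^k\mathbf x$, $$\frac{\mathbf x_k}{\|\mathbf x_k\|_2}\xrightarrow{wk}\frac{\mathbf w_1}{\|\mathbf w_1\|_2}.$$
   Context: The Levi-Civita field $\mathcal{R}$ (resp. $\mathcal{C}$) is the set of functions $a:\mathbb Q\to\mathbb R$ (resp. $\mathbb C$) with left-finite support (for every $r\in\mathbb Q$ only finitely many $q<r$ with $a(q)\ne0$), written $a[q]:=a(q)$; addition is pointwise, multiplication is $(ab)[q]=\sum_{q_1+q_2=q}a[q_1]b[q_2]$; $\mathcal{R}$ is a real closed ordered field ($a\succ b$ iff $(a-b)[\lambda(a-b)]>0$) and $\mathcal{C}=\mathcal{R}(i)$ is algebraically closed. $\lambda(a)=\min\{q:a[q]\ne0\}$ ($\lambda(0)=+\infty$); $a$ is at most finite if $\lambda(a)\ge0$. Absolute value: on $\mathcal{R}$, $|a|=a$ if $a\succeq0$ and $-a$ otherwise; on $\mathcal{C}$, $|a+ib|=\sqrt{a^2+b^2}$ for $a,b\in\mathcal{R}$.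 For $r\in\mathbb Q$, $\|a\|_r:=\sup_{q\le r}|a[q]|\in\mathbb R$. Weak convergence $a_n\xrightarrow{wk}a$: for every real $r>0$ there is $N_0$ with $\|a_n-a\|_{1/r}<r$ for all $n>N_0$. For vectors, weak convergence is coordinatewise, $\mathbf x[0]:=(\mathbf x^1[0],\dots,\mathbf x^n[0])\in\mathbb C^n$, and $\|\mathbf x\|_2=\sqrt{|\mathbf x^1|^2+\dots+|\mathbf x^n|^2}$. *)

theory Defs
  imports Complex_Main
begin

text \<open>Elements of the Levi-Civita field C, represented as functions from Q to the
  complex numbers; membership in C is the left-finiteness predicate. Elements of R
  are those with purely real coefficients.\<close>

type_synonym lc = "rat \<Rightarrow> complex"

definition left_finite :: "lc \<Rightarrow> bool" where
  "left_finite a \<longleftrightarrow> (\<forall>r. finite {q. q < r \<and> a q \<noteq> 0})"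

definition lc_real :: "lc \<Rightarrow> bool" where
  "lc_real a \<longleftrightarrow> (\<forall>q. Im (a q) = 0)"

definition lc_zero :: lc where "lc_zero = (\<lambda>q. 0)"
definition lc_one :: lc where "lc_one = (\<lambda>q. if q = 0 then 1 else 0)"
definition lc_add :: "lc \<Rightarrow> lc \<Rightarrow> lc" where "lc_add a b = (\<lambda>q. a q + b q)"
definition lc_sub :: "lc \<Rightarrow> lc \<Rightarrow> lc" where "lc_sub a b = (\<lambda>q. a q - b q)"

text \<open>Cauchy product (ab)[q] = sum over q1+q2=q of a[q1] b[q2] (finite sum for
  left-finite a, b).\<close>
definition lc_mult :: "lc \<Rightarrow> lc \<Rightarrow> lc" where
  "lc_mult a b = (\<lambda>q. \<Sum>(q1, q2) \<in> {(q1, q2). q1 + q2 = q \<and> a q1 \<noteq> 0 \<and> b q2 \<noteq> 0}.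
                         a q1 * b q2)"

definition lc_sum :: "nat \<Rightarrow> (nat \<Rightarrow> lc) \<Rightarrow> lc" where
  "lc_sum n f = (\<lambda>q. \<Sum>j<n. f j q)"

definition lc_inv :: "lc \<Rightarrow> lc" where
  "lc_inv a = (THE b. left_finite b \<and> lc_mult a b = lc_one)"

definition lc_at_most_finite :: "lc \<Rightarrow> bool" where
  "lc_at_most_finite a \<longleftrightarrow> (\<forall>q<0. a q = 0)"

definition lc_pos :: "lc \<Rightarrow> bool" where
  "lc_pos a \<longleftrightarrow> (\<exists>q. a q \<noteq> 0 \<and> (\<forall>p<q. a p = 0) \<and> Re (a q) > 0)"

definition lc_nonneg :: "lc \<Rightarrow> bool" where
  "lc_nonneg a \<longleftrightarrow> a = lc_zero \<or> lc_pos a"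

text \<open>Square root of a nonnegative element of R (R is real closed).\<close>
definition lc_sqrt :: "lc \<Rightarrow> lc" where
  "lc_sqrt t = (THE s. left_finite s \<and> lc_real s \<and> lc_nonneg s \<and> lc_mult s s = t)"

definition lc_re :: "lc \<Rightarrow> lc" where "lc_re z = (\<lambda>q. complex_of_real (Re (z q)))"
definition lc_im :: "lc \<Rightarrow> lc" where "lc_im z = (\<lambda>q. complex_of_real (Im (z q)))"

definition lc_cabs :: "lc \<Rightarrow> lc" where
  "lc_cabs z = lc_sqrt (lc_add (lc_mult (lc_re z) (lc_re z)) (lc_mult (lc_im z) (lc_im z)))"

text \<open>Vectors in C^n: functions nat => lc, coordinates i < n.\<close>
definition lc_norm2 :: "nat \<Rightarrow> (nat \<Rightarrow> lc) \<Rightarrow> lc" where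
  "lc_norm2 n x = lc_sqrt (lc_sum n (\<lambda>i. lc_mult (lc_cabs (x i)) (lc_cabs (x i))))"

definition lc_normalize :: "nat \<Rightarrow> (nat \<Rightarrow> lc) \<Rightarrow> nat \<Rightarrow> lc" where
  "lc_normalize n x = (\<lambda>i. lc_mult (lc_inv (lc_norm2 n x)) (x i))"

definition lc_mat_vec :: "nat \<Rightarrow> (nat \<Rightarrow> nat \<Rightarrow> lc) \<Rightarrow> (nat \<Rightarrow> lc) \<Rightarrow> nat \<Rightarrow> lc" where
  "lc_mat_vec n A x = (\<lambda>i. lc_sum n (\<lambda>j. lc_mult (A i j) (x j)))"

definition lc_mat_mult :: "nat \<Rightarrow> (nat \<Rightarrow> nat \<Rightarrow> lc) \<Rightarrow> (nat \<Rightarrow> nat \<Rightarrow> lc) \<Rightarrow> nat \<Rightarrow> nat \<Rightarrow> lc" where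
  "lc_mat_mult n A B = (\<lambda>i k. lc_sum n (\<lambda>j. lc_mult (A i j) (B j k)))"

definition lc_id_mat :: "nat \<Rightarrow> nat \<Rightarrow> lc" where
  "lc_id_mat = (\<lambda>i j. if i = j then lc_one else lc_zero)"

definition lc_diag :: "(nat \<Rightarrow> lc) \<Rightarrow> nat \<Rightarrow> nat \<Rightarrow> lc" where
  "lc_diag d = (\<lambda>i j. if i = j then d i else lc_zero)"

definition lc_diagonalizable_with :: "nat \<Rightarrow> (nat \<Rightarrow> nat \<Rightarrow> lc) \<Rightarrow> (nat \<Rightarrow> lc) \<Rightarrow> bool" where
  "lc_diagonalizable_with n A nu \<longleftrightarrow>
     (\<exists>P Q. (\<forall>i<n. \<forall>j<n. left_finite (P i j) \<and> left_finite (Q i j)) \<and>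
            (\<forall>i<n. \<forall>j<n. lc_mat_mult n P Q i j = lc_id_mat i j) \<and>
            (\<forall>i<n. \<forall>j<n. lc_mat_mult n Q P i j = lc_id_mat i j) \<and>
            (\<forall>i<n. \<forall>j<n. A i j = lc_mat_mult n (lc_mat_mult n P (lc_diag nu)) Q i j))"

definition lc_seminorm :: "real \<Rightarrow> lc \<Rightarrow> real" where
  "lc_seminorm t a = Sup {cmod (a q) | q. real_of_rat q \<le> t}"

definition lc_wk_conv :: "(nat \<Rightarrow> lc) \<Rightarrow> lc \<Rightarrow> bool" where
  "lc_wk_conv s l \<longleftrightarrow>
     (\<forall>r::real. r > 0 \<longrightarrow> (\<exists>N0. \<forall>k>N0. lc_seminorm (1 / r) (lc_sub (s k) l) < r))"

definition lc_vec_wk_conv :: "nat \<Rightarrow> (nat \<Rightarrow> nat \<Rightarrow> lc) \<Rightarrow> (nat \<Rightarrow> lc) \<Rightarrow> bool" where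
  "lc_vec_wk_conv n s l \<longleftrightarrow> (\<forall>i<n. lc_wk_conv (\<lambda>k. s k i) (l i))"

end

theory Submission
  imports Defs "HOL-Library.Poly_Mapping"
begin

text \<open>Everything happens inside a submonoid \<open>M\<close> of the nonnegative rationals with only finitely
  many elements below each bound, generated by the supports of the \<open>\<nu>\<^sub>j\<close> and \<open>w\<^sub>j\<close>.
  Products of series supported in \<open>M\<close> are finite sums, and inverses and square roots of
  series with nonzero constant coefficient stay in \<open>M\<close> and are computed coefficient by
  coefficient. Hence coefficientwise convergence, which for such series implies weak
  convergence, is preserved by all operations entering \<open>x/\<parallel>x\<parallel>\<^sub>2\<close>.
  Dividing \<open>x\<^sub>k = \<Sum>\<^sub>j \<nu>\<^sub>j\<^sup>k w\<^sub>j\<close> by the real positive \<open>\<nu>\<^sub>1\<^sup>k\<close> does not change the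
  normalised vector and leaves \<open>\<Sum>\<^sub>j \<rho>\<^sub>j\<^sup>k w\<^sub>j\<close> with \<open>\<rho>\<^sub>j = \<nu>\<^sub>j/\<nu>\<^sub>1\<close>; for \<open>j > 1\<close> the constant
  coefficient of \<open>\<rho>\<^sub>j\<close> has modulus below \<open>1\<close>, which makes every coefficient of \<open>\<rho>\<^sub>j\<^sup>k\<close> tend
  to \<open>0\<close>, so the sum converges coefficientwise to \<open>w\<^sub>1\<close>. (Indices start at \<open>0\<close> in the formal
  statement: \<open>\<nu>\<^sub>1\<close> and \<open>w\<^sub>1\<close> are \<open>nu 0\<close> and \<open>w 0\<close>.)\<close>

section \<open>Left-finite series form an integral domain\<close>

lemma left_finite_leading_coeff:
  assumes "left_finite a" "a q1 \<noteq> 0"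
  shows "\<exists>q0. a q0 \<noteq> 0 \<and> (\<forall>p<q0. a p = 0)"
proof -
  let ?F = "{q. q < q1 + 1 \<and> a q \<noteq> 0}"
  have fin: "finite ?F" and q1: "q1 \<in> ?F" using assms unfolding left_finite_def by auto
  have "Min ?F \<in> ?F" using Min_in[OF fin] q1 by blast
  moreover have "a p = 0" if "p < Min ?F" for p
  proof (rule ccontr)
    assume "a p \<noteq> 0"
    moreover have "Min ?F \<le> q1" using Min_le[OF fin q1] .
    ultimately have "p \<in> ?F" using that by auto
    then show False using Min_le[OF fin] that by fastforce
  qed
  ultimately show ?thesis by blast
qed

lemma left_finite_bounded_below: "left_finite a \<Longrightarrow> \<exists>L. \<forall>p<L. a p = 0"
  by (cases "\<exists>q. a q \<noteq> 0") (use left_finite_leading_coeff in blast, auto)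

lemma left_finite_lc_add: "left_finite a \<Longrightarrow> left_finite b \<Longrightarrow> left_finite (lc_add a b)"
  unfolding left_finite_def lc_add_def
  by (rule allI, rule finite_subset[of _ "{q. q < _ \<and> a q \<noteq> 0} \<union> {q. q < _ \<and> b q \<noteq> 0}"]) auto

lemma left_finite_uminus: "left_finite a \<Longrightarrow> left_finite (\<lambda>q. - a q)"
  unfolding left_finite_def by simp

lemma left_finite_lc_sub: "left_finite a \<Longrightarrow> left_finite b \<Longrightarrow> left_finite (lc_sub a b)"
proof -
  assume "left_finite a" "left_finite b"
  then have "left_finite (lc_add a (\<lambda>q. - b q))" by (simp add: left_finite_lc_add left_finite_uminus)
  then show ?thesis by (simp add: lc_add_def lc_sub_def)
qed

lemma left_finite_lc_zero: "left_finite lc_zero"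
  unfolding left_finite_def lc_zero_def by simp

lemma left_finite_lc_one: "left_finite lc_one"
  unfolding left_finite_def lc_one_def by (auto intro: finite_subset[of _ "{0}"])

lemma lc_mult_eq_0_below:
  assumes "\<forall>p<La. a p = 0" "\<forall>p<Lb. b p = 0" "q < La + Lb"
  shows "lc_mult a b q = 0"
proof -
  have E: "{(q1, q2). q1 + q2 = q \<and> a q1 \<noteq> 0 \<and> b q2 \<noteq> 0} = {}"
  proof (rule equals0I, clarify)
    fix q1 q2 assume "q = q1 + q2" "a q1 \<noteq> 0" "b q2 \<noteq> 0"
    moreover have "La \<le> q1" "Lb \<le> q2" using assms(1,2) calculation(2,3) not_less by blast+
    ultimately show False using assms(3) by linarith
  qed
  show ?thesis unfolding lc_mult_def E by (rule sum.empty)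
qed

lemma lc_mult_leading:
  assumes "\<forall>p<qa. a p = 0" "\<forall>p<qb. b p = 0"
  shows "lc_mult a b (qa + qb) = a qa * b qb"
proof -
  have "{(q1, q2). q1 + q2 = qa + qb \<and> a q1 \<noteq> 0 \<and> b q2 \<noteq> 0} \<subseteq> {(qa, qb)}"
  proof clarify
    fix q1 q2 assume "q1 + q2 = qa + qb" "a q1 \<noteq> 0" "b q2 \<noteq> 0"
    moreover have "qa \<le> q1" "qb \<le> q2" using assms calculation(2,3) not_less by blast+
    ultimately show "q1 = qa \<and> q2 = qb" by linarith
  qed
  then have "{(q1, q2). q1 + q2 = qa + qb \<and> a q1 \<noteq> 0 \<and> b q2 \<noteq> 0}
      = (if a qa \<noteq> 0 \<and> b qb \<noteq> 0 then {(qa, qb)} else {})"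
    by auto
  then show ?thesis unfolding lc_mult_def by simp
qed

text \<open>Associativity and distributivity are inherited from finitely supported functions
  (\<open>Poly_Mapping\<close>): up to any fixed exponent a product only sees truncations of its factors.\<close>

definition lc_trunc :: "rat \<Rightarrow> lc \<Rightarrow> lc" where
  "lc_trunc R a = (\<lambda>q. if q < R then a q else 0)"

lemma finite_support_lc_trunc: "left_finite a \<Longrightarrow> finite {q. lc_trunc R a q \<noteq> 0}"
proof -
  assume "left_finite a"
  moreover have "{q. lc_trunc R a q \<noteq> 0} = {q. q < R \<and> a q \<noteq> 0}" by (auto simp: lc_trunc_def)
  ultimately show ?thesis unfolding left_finite_def by simp
qed

lemma lc_mult_cong_below:
  assumes "\<forall>p<La. a p = 0" "\<forall>p<Lb. b p = 0" "\<forall>p<La. a' p = 0" "\<forall>p<Lb. b' p = 0"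
    "\<forall>p. p \<le> q - Lb \<longrightarrow> a' p = a p" "\<forall>p. p \<le> q - La \<longrightarrow> b' p = b p"
  shows "lc_mult a b q = lc_mult a' b' q"
proof -
  have agree: "a' q1 = a q1 \<and> b' q2 = b q2"
    if "q1 + q2 = q" "(a q1 \<noteq> 0 \<and> b q2 \<noteq> 0) \<or> (a' q1 \<noteq> 0 \<and> b' q2 \<noteq> 0)" for q1 q2
  proof -
    have "La \<le> q1" "Lb \<le> q2" using that assms(1-4) by (meson not_le)+
    then have "q1 \<le> q - Lb" "q2 \<le> q - La" using that(1) by linarith+
    then show ?thesis using assms(5,6) by blast
  qed
  have "(q1 + q2 = q \<and> a q1 \<noteq> 0 \<and> b q2 \<noteq> 0) \<longleftrightarrow> (q1 + q2 = q \<and> a' q1 \<noteq> 0 \<and> b' q2 \<noteq> 0)"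
    for q1 q2 using agree[of q1 q2] by auto
  then have "{(q1, q2). q1 + q2 = q \<and> a q1 \<noteq> 0 \<and> b q2 \<noteq> 0}
      = {(q1, q2). q1 + q2 = q \<and> a' q1 \<noteq> 0 \<and> b' q2 \<noteq> 0}"
    by blast
  then show ?thesis unfolding lc_mult_def
  proof (rule sum.cong)
    fix x assume "x \<in> {(q1, q2). q1 + q2 = q \<and> a' q1 \<noteq> 0 \<and> b' q2 \<noteq> 0}"
    then obtain q1 q2 where "x = (q1, q2)" "q1 + q2 = q" "a' q1 \<noteq> 0" "b' q2 \<noteq> 0" by blast
    then show "(case x of (q1, q2) \<Rightarrow> a q1 * b q2) = (case x of (q1, q2) \<Rightarrow> a' q1 * b' q2)"
      using agree[of q1 q2] by simp
  qed
qed

lemma lc_mult_lc_trunc: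
  assumes "\<forall>p<L. a p = 0" "\<forall>p<L. b p = 0" "q - L < R"
  shows "lc_mult a b q = lc_mult (lc_trunc R a) (lc_trunc R b) q"
  using assms by (intro lc_mult_cong_below[where La=L and Lb=L]) (auto simp: lc_trunc_def)

lemma lc_mult_eq_prod_fun:
  assumes "finite {q. f q \<noteq> 0}" "finite {q. g q \<noteq> 0}"
  shows "lc_mult f g = prod_fun f g"
proof
  fix k
  have "prod_fun f g k = (\<Sum>(a, b). f a * g b when k = a + b)" using prod_fun_unfold_prod[OF assms] .
  also have "\<dots> = sum (\<lambda>(a, b). f a * g b when k = a + b)
       {p. (case p of (a, b) \<Rightarrow> f a * g b when k = a + b) \<noteq> 0}" by (rule Sum_any.expand_set)
  also have "{p. (case p of (a, b) \<Rightarrow> f a * g b when k = a + b) \<noteq> 0}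
      = {(q1, q2). q1 + q2 = k \<and> f q1 \<noteq> 0 \<and> g q2 \<noteq> 0}" by (auto simp: when_def split: if_splits)
  finally show "lc_mult f g k = prod_fun f g k"
    unfolding lc_mult_def by (auto intro!: sum.cong simp: when_def split: if_splits)
qed

lemma lc_mult_lc_trunc_eq_prod_fun:
  assumes "left_finite a" "left_finite b" "\<forall>p<L. a p = 0" "\<forall>p<L. b p = 0" "q - L < R"
  shows "lc_mult a b q = prod_fun (lc_trunc R a) (lc_trunc R b) q"
proof -
  have "lc_mult a b q = lc_mult (lc_trunc R a) (lc_trunc R b) q"
    by (rule lc_mult_lc_trunc[OF assms(3-5)])
  then show ?thesis
    using lc_mult_eq_prod_fun[OF finite_support_lc_trunc[OF assms(1)] finite_support_lc_trunc[OF assms(2)]]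
    by simp
qed

lemma left_finite_lc_mult:
  assumes "left_finite a" "left_finite b"
  shows "left_finite (lc_mult a b)"
  unfolding left_finite_def
proof
  fix r
  obtain La where La: "\<forall>p<La. a p = 0" using left_finite_bounded_below[OF assms(1)] by blast
  obtain Lb where Lb: "\<forall>p<Lb. b p = 0" using left_finite_bounded_below[OF assms(2)] by blast
  define L where "L = min La Lb"
  have L: "\<forall>p<L. a p = 0" "\<forall>p<L. b p = 0" using La Lb unfolding L_def by auto
  define R where "R = r - L"
  have "{q. q < r \<and> lc_mult a b q \<noteq> 0} \<subseteq> {q. prod_fun (lc_trunc R a) (lc_trunc R b) q \<noteq> 0}"
  proof
    fix q assume "q \<in> {q. q < r \<and> lc_mult a b q \<noteq> 0}"
    moreover have "q - L < R" if "q < r" using that unfolding R_def by simp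
    ultimately show "q \<in> {q. prod_fun (lc_trunc R a) (lc_trunc R b) q \<noteq> 0}"
      using lc_mult_lc_trunc_eq_prod_fun[OF assms L] by auto
  qed
  moreover have "finite {q. prod_fun (lc_trunc R a) (lc_trunc R b) q \<noteq> 0}"
    using finite_prod_fun[OF finite_support_lc_trunc[OF assms(1)] finite_support_lc_trunc[OF assms(2)]] .
  ultimately show "finite {q. q < r \<and> lc_mult a b q \<noteq> 0}" by (rule finite_subset)
qed

lemma Abs_poly_mapping_mult:
  fixes f g :: lc
  assumes "finite {q. f q \<noteq> 0}" "finite {q. g q \<noteq> 0}"
  shows "Abs_poly_mapping f * Abs_poly_mapping g = Abs_poly_mapping (prod_fun f g)"
proof -
  have "Poly_Mapping.lookup (Abs_poly_mapping f * Abs_poly_mapping g) = prod_fun f g"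
    by (simp add: times_poly_mapping.rep_eq assms)
  then show ?thesis by (metis lookup_inverse)
qed

lemma prod_fun_assoc:
  fixes f g h :: lc
  assumes f: "finite {q. f q \<noteq> 0}" and g: "finite {q. g q \<noteq> 0}" and h: "finite {q. h q \<noteq> 0}"
  shows "prod_fun (prod_fun f g) h = prod_fun f (prod_fun g h)"
proof -
  have f1: "finite {q. prod_fun f g q \<noteq> 0}" using finite_prod_fun[OF f g] .
  have f2: "finite {q. prod_fun g h q \<noteq> 0}" using finite_prod_fun[OF g h] .
  have "Abs_poly_mapping f * Abs_poly_mapping g * Abs_poly_mapping h
      = Abs_poly_mapping f * (Abs_poly_mapping g * Abs_poly_mapping h)"
    by (simp add: mult.assoc)
  then have "Abs_poly_mapping (prod_fun (prod_fun f g) h) = Abs_poly_mapping (prod_fun f (prod_fun g h))"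
    by (simp add: Abs_poly_mapping_mult f g h f1 f2)
  moreover have "finite {q. prod_fun (prod_fun f g) h q \<noteq> 0}" using finite_prod_fun[OF f1 h] .
  moreover have "finite {q. prod_fun f (prod_fun g h) q \<noteq> 0}" using finite_prod_fun[OF f f2] .
  ultimately show ?thesis by (metis lookup_Abs_poly_mapping)
qed

lemma prod_fun_add_right:
  fixes f g h :: lc
  assumes fa: "finite {q. f q \<noteq> 0}" and fb: "finite {q. g q \<noteq> 0}" and fc: "finite {q. h q \<noteq> 0}"
  shows "prod_fun f (\<lambda>k. g k + h k) k = prod_fun f g k + prod_fun f h k"
proof -
  have fgh: "finite {q. g q + h q \<noteq> 0}"
  proof -
    have "{q. g q + h q \<noteq> 0} \<subseteq> {q. g q \<noteq> 0} \<union> {q. h q \<noteq> 0}" by auto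
    then show ?thesis using fb fc finite_subset by blast
  qed
  have e: "Abs_poly_mapping g + Abs_poly_mapping h = Abs_poly_mapping (\<lambda>k. g k + h k)"
  proof -
    have "Poly_Mapping.lookup (Abs_poly_mapping g + Abs_poly_mapping h) = (\<lambda>k. g k + h k)"
      by (rule ext) (simp add: lookup_add fb fc)
    then show ?thesis by (metis lookup_inverse)
  qed
  have "Abs_poly_mapping f * (Abs_poly_mapping g + Abs_poly_mapping h)
      = Abs_poly_mapping f * Abs_poly_mapping g + Abs_poly_mapping f * Abs_poly_mapping h"
    by (simp add: distrib_left)
  then have "Poly_Mapping.lookup (Abs_poly_mapping (prod_fun f (\<lambda>k. g k + h k))) k
     = Poly_Mapping.lookup (Abs_poly_mapping (prod_fun f g) + Abs_poly_mapping (prod_fun f h)) k"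
    by (simp add: e Abs_poly_mapping_mult fa fb fc fgh)
  then show ?thesis
    by (simp add: lookup_add finite_prod_fun fa fb fc fgh)
qed


lemma lc_mult_assoc:
  assumes "left_finite a" "left_finite b" "left_finite c"
  shows "lc_mult (lc_mult a b) c = lc_mult a (lc_mult b c)"
proof
  fix q
  obtain La Lb Lc where "\<forall>p<La. a p = 0" "\<forall>p<Lb. b p = 0" "\<forall>p<Lc. c p = 0"
    using assms left_finite_bounded_below by meson
  then obtain L where L: "\<forall>p<L. a p = 0" "\<forall>p<L. b p = 0" "\<forall>p<L. c p = 0" "L \<le> 0"
    by (intro that[of "min 0 (min La (min Lb Lc))"]) auto
  define R where "R = q - 2 * L + 1"
  let ?ta = "lc_trunc R a" and ?tb = "lc_trunc R b" and ?tc = "lc_trunc R c"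
  have t: "\<forall>p<L. ?ta p = 0" "\<forall>p<L. ?tb p = 0" "\<forall>p<L. ?tc p = 0"
    using L by (simp_all add: lc_trunc_def)
  have fin: "finite {q. ?ta q \<noteq> 0}" "finite {q. ?tb q \<noteq> 0}" "finite {q. ?tc q \<noteq> 0}"
    using assms by (simp_all add: finite_support_lc_trunc)
  have trunc_eq: "\<forall>p. p \<le> q - (L + L) \<longrightarrow> lc_trunc R x p = x p" for x
    using L(4) unfolding R_def lc_trunc_def by auto
  have below: "\<forall>p<L + L. lc_mult x y p = 0" if "\<forall>p<L. x p = 0" "\<forall>p<L. y p = 0" for x y
    using lc_mult_eq_0_below[OF that] by blast
  have near: "\<forall>p. p \<le> q - L \<longrightarrow> lc_mult (lc_trunc R x) (lc_trunc R y) p = lc_mult x y p"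
    if "\<forall>p<L. x p = 0" "\<forall>p<L. y p = 0" for x y
    using lc_mult_lc_trunc[OF that] L(4) unfolding R_def by (metis diff_right_mono less_add_one
        mult_2 diff_diff_eq order_le_less_trans)
  have "lc_mult (lc_mult a b) c q = lc_mult (lc_mult ?ta ?tb) ?tc q"
    using below[OF L(1,2)] L(3) below[OF t(1,2)] t(3) near[OF L(1,2)] trunc_eq
    by (rule lc_mult_cong_below)
  also have "lc_mult (lc_mult ?ta ?tb) ?tc = prod_fun (prod_fun ?ta ?tb) ?tc"
    using fin by (simp add: lc_mult_eq_prod_fun finite_prod_fun)
  also have "\<dots> = prod_fun ?ta (prod_fun ?tb ?tc)"
    using fin by (rule prod_fun_assoc)
  also have "\<dots> = lc_mult ?ta (lc_mult ?tb ?tc)"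
    using fin by (simp add: lc_mult_eq_prod_fun finite_prod_fun)
  also have "lc_mult ?ta (lc_mult ?tb ?tc) q = lc_mult a (lc_mult b c) q"
    using L(1) below[OF L(2,3)] t(1) below[OF t(2,3)] trunc_eq near[OF L(2,3)]
    by (rule lc_mult_cong_below[symmetric])
  finally show "lc_mult (lc_mult a b) c q = lc_mult a (lc_mult b c) q" .
qed

lemma lc_mult_commute: "lc_mult a b = lc_mult b a"
proof
  fix q
  show "lc_mult a b q = lc_mult b a q" unfolding lc_mult_def
    by (rule sum.reindex_bij_witness[where i=prod.swap and j=prod.swap]) (auto simp: add.commute mult.commute)
qed

lemma lc_mult_lc_add_right:
  assumes "left_finite a" "left_finite b" "left_finite c"
  shows "lc_mult a (lc_add b c) = lc_add (lc_mult a b) (lc_mult a c)"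
proof
  fix q
  obtain La Lb Lc where "\<forall>p<La. a p = 0" "\<forall>p<Lb. b p = 0" "\<forall>p<Lc. c p = 0"
    using assms left_finite_bounded_below by meson
  then obtain L where L: "\<forall>p<L. a p = 0" "\<forall>p<L. b p = 0" "\<forall>p<L. c p = 0"
    by (intro that[of "min La (min Lb Lc)"]) auto
  then have Lbc: "\<forall>p<L. lc_add b c p = 0" by (simp add: lc_add_def)
  define R where "R = q - L + 1"
  have R: "q - L < R" unfolding R_def by simp
  have "lc_mult a (lc_add b c) q = prod_fun (lc_trunc R a) (lc_trunc R (lc_add b c)) q"
    by (rule lc_mult_lc_trunc_eq_prod_fun[OF assms(1) left_finite_lc_add[OF assms(2,3)] L(1) Lbc R])
  also have "lc_trunc R (lc_add b c) = (\<lambda>k. lc_trunc R b k + lc_trunc R c k)"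
    by (auto simp: lc_trunc_def lc_add_def)
  also have "prod_fun (lc_trunc R a) (\<lambda>k. lc_trunc R b k + lc_trunc R c k) q
      = prod_fun (lc_trunc R a) (lc_trunc R b) q + prod_fun (lc_trunc R a) (lc_trunc R c) q"
    using assms by (intro prod_fun_add_right finite_support_lc_trunc)
  also have "\<dots> = lc_add (lc_mult a b) (lc_mult a c) q"
    unfolding lc_add_def
    using lc_mult_lc_trunc_eq_prod_fun[OF assms(1,2) L(1,2) R] lc_mult_lc_trunc_eq_prod_fun[OF assms(1,3) L(1,3) R]
    by simp
  finally show "lc_mult a (lc_add b c) q = lc_add (lc_mult a b) (lc_mult a c) q" .
qed

lemma lc_mult_lc_one: "lc_mult lc_one a = a"
proof
  fix q
  have "{(q1, q2). q1 + q2 = q \<and> lc_one q1 \<noteq> 0 \<and> a q2 \<noteq> 0} = (if a q \<noteq> 0 then {(0, q)} else {})"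
    by (auto simp: lc_one_def split: if_splits)
  then show "lc_mult lc_one a q = a q" unfolding lc_mult_def by (simp add: lc_one_def)
qed

lemma lc_mult_lc_zero: "lc_mult lc_zero a = lc_zero"
  unfolding lc_mult_def lc_zero_def by simp

typedef lf = "{a::lc. left_finite a}" morphisms Rep_lf Abs_lf
  using left_finite_lc_zero by blast

setup_lifting type_definition_lf

instantiation lf :: comm_ring_1
begin
lift_definition zero_lf :: lf is lc_zero by (rule left_finite_lc_zero)
lift_definition one_lf :: lf is lc_one by (rule left_finite_lc_one)
lift_definition plus_lf :: "lf \<Rightarrow> lf \<Rightarrow> lf" is lc_add by (rule left_finite_lc_add)
lift_definition minus_lf :: "lf \<Rightarrow> lf \<Rightarrow> lf" is lc_sub by (rule left_finite_lc_sub)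
lift_definition uminus_lf :: "lf \<Rightarrow> lf" is "\<lambda>a q. - a q" by (rule left_finite_uminus)
lift_definition times_lf :: "lf \<Rightarrow> lf \<Rightarrow> lf" is lc_mult by (rule left_finite_lc_mult)
instance
proof
  fix a b c :: lf
  show "a * b * c = a * (b * c)" by transfer (rule lc_mult_assoc)
  show "a * b = b * a" by transfer (rule lc_mult_commute)
  show "1 * a = a" by transfer (rule lc_mult_lc_one)
  show "(a + b) * c = a * c + b * c" by transfer (metis lc_mult_commute lc_mult_lc_add_right)
  show "a + b + c = a + (b + c)" by transfer (simp add: lc_add_def add.assoc)
  show "a + b = b + a" by transfer (simp add: lc_add_def add.commute)
  show "0 + a = a" by transfer (simp add: lc_add_def lc_zero_def)
  show "- a + a = 0" by transfer (simp add: lc_add_def lc_zero_def)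
  show "a - b = a + - b" by transfer (simp add: lc_add_def lc_sub_def)
  show "(0::lf) \<noteq> 1" by transfer (simp add: lc_zero_def lc_one_def fun_eq_iff)
qed
end

instance lf :: idom
proof
  fix a b :: lf
  assume "a \<noteq> 0" "b \<noteq> 0"
  then show "a * b \<noteq> 0"
  proof transfer
    fix a b :: lc
    assume a: "left_finite a" "a \<noteq> lc_zero" and b: "left_finite b" "b \<noteq> lc_zero"
    obtain qa where qa: "a qa \<noteq> 0" "\<forall>p<qa. a p = 0"
      using a left_finite_leading_coeff by (metis lc_zero_def ext)
    obtain qb where qb: "b qb \<noteq> 0" "\<forall>p<qb. b p = 0"
      using b left_finite_leading_coeff by (metis lc_zero_def ext)
    have "lc_mult a b (qa + qb) \<noteq> 0" using lc_mult_leading[OF qa(2) qb(2)] qa(1) qb(1) by simp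
    then show "lc_mult a b \<noteq> lc_zero" by (auto simp: lc_zero_def)
  qed
qed

lemma Rep_Abs_lf: "left_finite a \<Longrightarrow> Rep_lf (Abs_lf a) = a"
  by (simp add: Abs_lf_inverse)

lemma Rep_lf_sum: "Rep_lf (\<Sum>j<n. F j) = lc_sum n (\<lambda>j. Rep_lf (F j))"
  by (induction n) (simp_all add: lc_sum_def zero_lf.rep_eq lc_zero_def plus_lf.rep_eq lc_add_def)

lemma lc_inv_eqI:
  assumes a: "left_finite a" and b: "left_finite b" and ab: "lc_mult a b = lc_one"
  shows "lc_inv a = b"
  unfolding lc_inv_def
proof (rule the_equality)
  show "left_finite b \<and> lc_mult a b = lc_one" using b ab by simp
  fix b' assume b': "left_finite b' \<and> lc_mult a b' = lc_one"
  have "Abs_lf a * Abs_lf b = 1" "Abs_lf a * Abs_lf b' = 1"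
    using a b b' ab by (metis Rep_lf_inject times_lf.rep_eq one_lf.rep_eq Rep_Abs_lf)+
  then have "Abs_lf b' = Abs_lf b" by (metis mult.assoc mult.commute mult_1_right)
  then show "b' = b" using b b' by (metis Rep_Abs_lf)
qed

section \<open>Support monoids\<close>

definition support_monoid :: "rat set \<Rightarrow> bool" where
  "support_monoid M \<longleftrightarrow> 0 \<in> M \<and> (\<forall>p\<in>M. \<forall>q\<in>M. p + q \<in> M) \<and> (\<forall>p\<in>M. 0 \<le> p) \<and>
     (\<forall>r. finite {p\<in>M. p < r})"

definition supported :: "rat set \<Rightarrow> lc \<Rightarrow> bool" where
  "supported M a \<longleftrightarrow> (\<forall>q. a q \<noteq> 0 \<longrightarrow> q \<in> M)"

context
  fixes M :: "rat set"
  assumes M: "support_monoid M"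
begin

lemma support_monoid_finite_below: "finite {p\<in>M. p < r}"
  using M unfolding support_monoid_def by blast

lemma support_monoid_finite_atMost: "finite {p\<in>M. p \<le> r}"
  by (rule finite_subset[OF _ support_monoid_finite_below[of "r + 1"]]) auto

lemma support_monoid_zero: "0 \<in> M"
  using M unfolding support_monoid_def by blast

lemma support_monoid_add: "p \<in> M \<Longrightarrow> q \<in> M \<Longrightarrow> p + q \<in> M"
  using M unfolding support_monoid_def by blast

lemma support_monoid_nonneg: "p \<in> M \<Longrightarrow> 0 \<le> p"
  using M unfolding support_monoid_def by blast

lemma left_finite_if_supported: "supported M a \<Longrightarrow> left_finite a"
  unfolding left_finite_def supported_def
  by (auto intro: finite_subset[OF _ support_monoid_finite_below])

lemma supported_eq_0: "supported M a \<Longrightarrow> q \<notin> M \<Longrightarrow> a q = 0"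
  unfolding supported_def by blast

lemma supported_eq_0_negative: "supported M a \<Longrightarrow> q < 0 \<Longrightarrow> a q = 0"
  using supported_eq_0 support_monoid_nonneg by force

lemma support_monoid_card_below_less:
  "p \<in> M \<Longrightarrow> p < q \<Longrightarrow> card {p'\<in>M. p' < p} < card {p'\<in>M. p' < q}"
  by (intro psubset_card_mono support_monoid_finite_below) auto

lemma lc_mult_supported:
  assumes "supported M a" "supported M b"
  shows "lc_mult a b q = (\<Sum>p\<in>{p\<in>M. p \<le> q}. a p * b (q - p))"
proof -
  let ?P = "{p. a p \<noteq> 0 \<and> b (q - p) \<noteq> 0}"
  have "lc_mult a b q = (\<Sum>p\<in>?P. a p * b (q - p))"
    unfolding lc_mult_def
    by (rule sum.reindex_bij_witness[where i="\<lambda>p. (p, q - p)" and j=fst]) auto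
  also have "\<dots> = (\<Sum>p\<in>{p\<in>M. p \<le> q}. a p * b (q - p))"
  proof (rule sum.mono_neutral_left[OF support_monoid_finite_atMost])
    show "?P \<subseteq> {p\<in>M. p \<le> q}"
    proof
      fix p assume "p \<in> ?P"
      then have "p \<in> M" "q - p \<in> M" using assms unfolding supported_def by auto
      then show "p \<in> {p\<in>M. p \<le> q}" using support_monoid_nonneg[of "q - p"] by simp
    qed
  qed auto
  finally show ?thesis .
qed

lemma lc_mult_supported_at:
  assumes "supported M a" "supported M b" "q \<in> M"
  shows "lc_mult a b q = a 0 * b q + (\<Sum>p\<in>{p\<in>M. 0 < p \<and> p \<le> q}. a p * b (q - p))"
proof -
  have "{p\<in>M. p \<le> q} = insert 0 {p\<in>M. 0 < p \<and> p \<le> q}"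
    using support_monoid_zero support_monoid_nonneg assms(3) by force
  moreover have "finite {p\<in>M. 0 < p \<and> p \<le> q}"
    by (rule finite_subset[OF _ support_monoid_finite_atMost[of q]]) auto
  ultimately show ?thesis using lc_mult_supported[OF assms(1,2), of q] by simp
qed

lemma lc_mult_supported_at_0:
  "supported M a \<Longrightarrow> supported M b \<Longrightarrow> lc_mult a b 0 = a 0 * b 0"
proof -
  assume "supported M a" "supported M b"
  then have "lc_mult a b 0 = a 0 * b 0 + (\<Sum>p\<in>{p\<in>M. 0 < p \<and> p \<le> 0}. a p * b (0 - p))"
    by (rule lc_mult_supported_at[OF _ _ support_monoid_zero])
  also have "(\<Sum>p\<in>{p\<in>M. 0 < p \<and> p \<le> 0}. a p * b (0 - p)) = 0"
    by (rule sum.neutral) auto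
  finally show ?thesis by simp
qed

lemma lc_mult_self_supported_at:
  assumes "supported M s" "q \<in> M" "0 < q"
  shows "lc_mult s s q = 2 * s 0 * s q + (\<Sum>p\<in>{p\<in>M. 0 < p \<and> p < q}. s p * s (q - p))"
proof -
  have "{p\<in>M. 0 < p \<and> p \<le> q} = insert q {p\<in>M. 0 < p \<and> p < q}"
    using assms(2,3) by auto
  moreover have "finite {p\<in>M. 0 < p \<and> p < q}"
    by (rule finite_subset[OF _ support_monoid_finite_below[of q]]) auto
  ultimately show ?thesis
    using lc_mult_supported_at[OF assms(1,1,2)] by (simp add: algebra_simps)
qed

lemma supported_lc_mult: "supported M a \<Longrightarrow> supported M b \<Longrightarrow> supported M (lc_mult a b)"
  unfolding supported_def
proof (intro allI impI)
  fix q assume a: "\<forall>q. a q \<noteq> 0 \<longrightarrow> q \<in> M" and b: "\<forall>q. b q \<noteq> 0 \<longrightarrow> q \<in> M"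
    and "lc_mult a b q \<noteq> 0"
  then have "{(q1, q2). q1 + q2 = q \<and> a q1 \<noteq> 0 \<and> b q2 \<noteq> 0} \<noteq> {}"
    unfolding lc_mult_def by force
  then obtain q1 q2 where "q1 + q2 = q" "a q1 \<noteq> 0" "b q2 \<noteq> 0" by blast
  then show "q \<in> M" using a b support_monoid_add by blast
qed

lemma supported_lc_add: "supported M a \<Longrightarrow> supported M b \<Longrightarrow> supported M (lc_add a b)"
  unfolding supported_def lc_add_def by force

lemma supported_lc_sub: "supported M a \<Longrightarrow> supported M b \<Longrightarrow> supported M (lc_sub a b)"
  unfolding supported_def lc_sub_def by force

lemma supported_lc_zero: "supported M lc_zero"
  unfolding supported_def lc_zero_def by simp

lemma supported_lc_one: "supported M lc_one"
  unfolding supported_def lc_one_def using support_monoid_zero by auto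

lemma supported_lc_re: "supported M a \<Longrightarrow> supported M (lc_re a)"
  unfolding supported_def lc_re_def by (metis zero_complex.sel(1) of_real_0)

lemma supported_lc_im: "supported M a \<Longrightarrow> supported M (lc_im a)"
  unfolding supported_def lc_im_def by (metis zero_complex.sel(2) of_real_0)

lemma supported_lc_sum: "(\<And>j. j < n \<Longrightarrow> supported M (f j)) \<Longrightarrow> supported M (lc_sum n f)"
  unfolding supported_def lc_sum_def
  by (meson lessThan_iff sum.not_neutral_contains_not_neutral)

lemma supported_power: "supported M (Rep_lf a) \<Longrightarrow> supported M (Rep_lf (a ^ k))"
  by (induction k) (simp_all add: one_lf.rep_eq supported_lc_one times_lf.rep_eq supported_lc_mult)

end

lemma support_monoid_induct [consumes 1, case_names outside step]:
  assumes M: "support_monoid M"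
    and outside: "\<And>q. q \<notin> M \<Longrightarrow> P q"
    and step: "\<And>q. q \<in> M \<Longrightarrow> (\<And>p. p < q \<Longrightarrow> P p) \<Longrightarrow> P q"
  shows "P q"
proof -
  have "q \<in> M \<longrightarrow> P q"
  proof (induction q rule: measure_induct_rule[where f="\<lambda>q. card {p\<in>M. p < q}"])
    case (less q)
    show ?case
    proof
      assume "q \<in> M"
      then show "P q"
      proof (rule step)
        fix p assume "p < q"
        show "P p"
        proof (cases "p \<in> M")
          case True
          then show ?thesis using less[of p] support_monoid_card_below_less[OF M True \<open>p < q\<close>] by blast
        qed (rule outside)
      qed
    qed
  qed
  then show ?thesis using outside by blast
qed


inductive_set monoid_gen :: "rat set \<Rightarrow> rat set" for S where
  zero: "0 \<in> monoid_gen S"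
| add: "p \<in> monoid_gen S \<Longrightarrow> s \<in> S \<Longrightarrow> p + s \<in> monoid_gen S"

lemma monoid_gen_add: "q \<in> monoid_gen S \<Longrightarrow> p \<in> monoid_gen S \<Longrightarrow> p + q \<in> monoid_gen S"
  by (induction q rule: monoid_gen.induct) (auto simp flip: add.assoc intro: monoid_gen.add)

lemma monoid_gen_sum_list:
  assumes "\<forall>s\<in>S. 0 \<le> s" "p \<in> monoid_gen S"
  shows "\<exists>xs. set xs \<subseteq> {s\<in>S. 0 < s} \<and> sum_list xs = p"
  using assms(2)
proof (induction p rule: monoid_gen.induct)
  case zero
  show ?case by (rule exI[of _ "[]"]) simp
next
  case (add p s)
  then obtain xs where xs: "set xs \<subseteq> {s\<in>S. 0 < s}" "sum_list xs = p" by blast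
  show ?case
  proof (cases "s = 0")
    case True
    then show ?thesis using xs by auto
  next
    case False
    then have "0 < s" using add.hyps(2) assms(1) by force
    then show ?thesis using xs add.hyps(2) by (intro exI[of _ "s # xs"]) auto
  qed
qed

lemma finite_monoid_gen_below:
  assumes nn: "\<forall>s\<in>S. 0 \<le> s" and lf: "\<forall>r. finite {s\<in>S. s < r}"
  shows "finite {p\<in>monoid_gen S. p < r}"
proof -
  define F where "F = {s\<in>S. 0 < s \<and> s < r}"
  have finF: "finite F"
    using lf[rule_format, of r] by (rule finite_subset[rotated]) (auto simp: F_def)
  define K where "K = (if F = {} then 0 else nat \<lceil>r / Min F\<rceil>)"
  have "{p\<in>monoid_gen S. p < r} \<subseteq> sum_list ` {xs. set xs \<subseteq> F \<and> length xs \<le> K}"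
  proof
    fix p assume p: "p \<in> {p\<in>monoid_gen S. p < r}"
    then obtain xs where xs: "set xs \<subseteq> {s\<in>S. 0 < s}" "sum_list xs = p"
      using monoid_gen_sum_list[OF nn] by blast
    have "x \<le> p" if "x \<in> set xs" for x
      using member_le_sum_list[OF that] xs by fastforce
    then have F: "set xs \<subseteq> F" using xs(1) p unfolding F_def by fastforce
    have "length xs \<le> K"
    proof (cases "F = {}")
      case False
      have "of_nat (length ys) * Min F \<le> sum_list ys" if "set ys \<subseteq> F" for ys
        using that finF by (induction ys) (auto simp: algebra_simps intro!: add_mono Min_le)
      then have "of_nat (length xs) * Min F < r" using F xs(2) p by fastforce
      moreover have "0 < Min F" using finF False by (simp add: F_def)
      ultimately have "of_nat (length xs) < r / Min F" by (simp add: pos_less_divide_eq)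
      then have "of_nat (length xs) < (of_int \<lceil>r / Min F\<rceil> :: rat)"
        using le_of_int_ceiling[of "r / Min F"] by linarith
      then have "int (length xs) < \<lceil>r / Min F\<rceil>" by (metis of_int_less_iff of_int_of_nat_eq)
      then show ?thesis unfolding K_def using False by (simp add: le_nat_iff)
    qed (use F in \<open>simp add: K_def\<close>)
    then show "p \<in> sum_list ` {xs. set xs \<subseteq> F \<and> length xs \<le> K}" using xs(2) F by blast
  qed
  moreover have "finite (sum_list ` {xs. set xs \<subseteq> F \<and> length xs \<le> K})"
    using finite_lists_length_le[OF finF] by blast
  ultimately show ?thesis by (rule finite_subset)
qed

lemma support_monoid_monoid_gen:
  assumes "\<forall>s\<in>S. 0 \<le> s" "\<forall>r. finite {s\<in>S. s < r}"
  shows "support_monoid (monoid_gen S)"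
  unfolding support_monoid_def
proof (intro conjI ballI allI)
  fix p assume "p \<in> monoid_gen S"
  then obtain xs where "set xs \<subseteq> {s\<in>S. 0 < s}" "sum_list xs = p"
    using monoid_gen_sum_list[OF assms(1)] by blast
  then show "0 \<le> p" by (metis (mono_tags, lifting) less_imp_le mem_Collect_eq subsetD sum_list_nonneg)
next
  fix p q assume "p \<in> monoid_gen S" "q \<in> monoid_gen S"
  then show "p + q \<in> monoid_gen S" by (rule monoid_gen_add[rotated])
qed (simp_all add: monoid_gen.zero finite_monoid_gen_below[OF assms])

lemma exists_support_monoid:
  assumes "finite F" "\<forall>a\<in>F. left_finite a \<and> lc_at_most_finite a"
  shows "\<exists>M. support_monoid M \<and> (\<forall>a\<in>F. supported M a)"
proof -
  let ?S = "\<Union>a\<in>F. {q. a q \<noteq> 0}"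
  have "\<forall>s\<in>?S. 0 \<le> s"
    using assms(2) unfolding lc_at_most_finite_def by (auto simp: not_less[symmetric])
  moreover have "finite {s\<in>?S. s < r}" for r
  proof -
    have "{s\<in>?S. s < r} = (\<Union>a\<in>F. {q. q < r \<and> a q \<noteq> 0})" by auto
    then show ?thesis using assms unfolding left_finite_def by simp
  qed
  ultimately have "support_monoid (monoid_gen ?S)" by (intro support_monoid_monoid_gen) auto
  moreover have "supported (monoid_gen ?S) a" if "a \<in> F" for a
    unfolding supported_def using that monoid_gen.add[OF monoid_gen.zero, of _ ?S] by auto
  ultimately show ?thesis by blast
qed

section \<open>Inverses and square roots\<close>

primrec causal_iter :: "rat set \<Rightarrow> (lc \<Rightarrow> lc) \<Rightarrow> nat \<Rightarrow> lc" where
  "causal_iter M F 0 = (\<lambda>q. 0)"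
| "causal_iter M F (Suc N) = (\<lambda>q. if q \<in> M then F (causal_iter M F N) q else 0)"

definition causal :: "rat set \<Rightarrow> (lc \<Rightarrow> lc) \<Rightarrow> bool" where
  "causal M F \<longleftrightarrow> (\<forall>h h' q. q \<in> M \<longrightarrow> (\<forall>p<q. h p = h' p) \<longrightarrow> F h q = F h' q)"

lemma causal_iter_outside: "q \<notin> M \<Longrightarrow> causal_iter M F N q = 0"
  by (cases N) simp_all

context
  fixes M :: "rat set"
  assumes M: "support_monoid M"
begin

lemma causal_fixpoint:
  assumes F: "causal M F"
  shows "\<exists>b. supported M b \<and> (\<forall>q\<in>M. b q = F b q)"
proof -
  define b where "b q = causal_iter M F (Suc (card {p\<in>M. p < q})) q" for q
  have iter: "q \<in> M \<longrightarrow> (\<forall>N. card {p\<in>M. p < q} < N \<longrightarrow> causal_iter M F N q = F b q)" for q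
  using M proof (induction q rule: support_monoid_induct)
    case (step q)
    have b_eq: "b p = F b p" if "p \<in> M" "p < q" for p
    proof -
      have "b p = causal_iter M F (Suc (card {p'\<in>M. p' < p})) p" by (simp only: b_def)
      also have "\<dots> = F b p" using step.IH[OF that(2)] that(1) by blast
      finally show ?thesis .
    qed
    show ?case
    proof (intro impI allI)
      fix N assume "q \<in> M" "card {p\<in>M. p < q} < N"
      then obtain N' where N': "N = Suc N'" "card {p\<in>M. p < q} \<le> N'" by (cases N) auto
      have "causal_iter M F N' p = b p" if "p < q" for p
      proof (cases "p \<in> M")
        case True
        then show ?thesis using step.IH[OF that] b_eq[OF True that] N'(2)
            support_monoid_card_below_less[OF M True that] by simp
      qed (simp add: b_def causal_iter_outside)
      then show "causal_iter M F N q = F b q"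
        using F \<open>q \<in> M\<close> N'(1) unfolding causal_def by simp
    qed
  qed simp
  have "supported M b" unfolding supported_def b_def by auto
  moreover have "b q = F b q" if "q \<in> M" for q
  proof -
    have "b q = causal_iter M F (Suc (card {p\<in>M. p < q})) q" by (simp only: b_def)
    also have "\<dots> = F b q" using iter[of q] that by blast
    finally show ?thesis .
  qed
  ultimately show ?thesis by blast
qed

lemma supported_lc_inv:
  assumes a: "supported M a" and a0: "a 0 \<noteq> 0"
  shows "supported M (lc_inv a)" "lc_mult a (lc_inv a) = lc_one"
proof -
  define F where "F h q = (lc_one q - (\<Sum>p\<in>{p\<in>M. 0 < p \<and> p \<le> q}. a p * h (q - p))) / a 0" for h q
  have "causal M F"
    unfolding causal_def F_def by (auto intro!: sum.cong arg_cong2[where f="(/)"])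
  then obtain b where b: "supported M b" "\<And>q. q \<in> M \<Longrightarrow> b q = F b q"
    using causal_fixpoint by blast
  have "lc_mult a b q = lc_one q" for q
  proof (cases "q \<in> M")
    case True
    then show ?thesis
      using lc_mult_supported_at[OF M a b(1) True] b(2)[OF True] a0 by (simp add: F_def)
  next
    case False
    then show ?thesis
      using supported_eq_0[OF M supported_lc_mult[OF M a b(1)]] support_monoid_zero[OF M]
      by (auto simp: lc_one_def)
  qed
  then have ab: "lc_mult a b = lc_one" ..
  then have "lc_inv a = b"
    by (intro lc_inv_eqI left_finite_if_supported[OF M] a b(1))
  then show "supported M (lc_inv a)" "lc_mult a (lc_inv a) = lc_one" using b(1) ab by simp_all
qed

lemma supported_sqrt:
  assumes t: "supported M t" "lc_real t" "Re (t 0) > 0"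
  shows "\<exists>s. supported M s \<and> lc_real s \<and> Re (s 0) > 0 \<and> lc_mult s s = t"
proof -
  define c where "c = complex_of_real (sqrt (Re (t 0)))"
  have c: "c \<noteq> 0" "c * c = t 0" "c \<in> \<real>"
    using t(2,3) unfolding c_def lc_real_def by (auto simp: complex_eq_iff)
  define F where "F h q = (if q = 0 then c else
     (t q - (\<Sum>p\<in>{p\<in>M. 0 < p \<and> p < q}. h p * h (q - p))) / (2 * c))" for h q
  have "causal M F"
    unfolding causal_def F_def by (auto intro!: sum.cong arg_cong2[where f="(/)"])
  then obtain s where s: "supported M s" "\<And>q. q \<in> M \<Longrightarrow> s q = F s q"
    using causal_fixpoint by blast
  have s0: "s 0 = c" using s(2)[OF support_monoid_zero[OF M]] by (simp add: F_def)
  have "lc_mult s s q = t q" for q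
  proof (cases "q \<in> M")
    case True
    show ?thesis
    proof (cases "q = 0")
      case False
      then have "0 < q" using support_monoid_nonneg[OF M True] by simp
      then show ?thesis
        using lc_mult_self_supported_at[OF M s(1) True] s(2)[OF True] s0 c(1) False
        by (simp add: F_def field_simps)
    qed (simp add: lc_mult_supported_at_0[OF M s(1,1)] s0 c(2))
  qed (simp add: supported_eq_0[OF M supported_lc_mult[OF M s(1,1)]] supported_eq_0[OF M t(1)])
  moreover have "s q \<in> \<real>" for q
  using M proof (induction q rule: support_monoid_induct)
    case (outside q)
    then show ?case using supported_eq_0[OF M s(1)] by simp
  next
    case (step q)
    have "(\<Sum>p\<in>{p\<in>M. 0 < p \<and> p < q}. s p * s (q - p)) \<in> \<real>"
      by (rule sum_in_Reals) (simp add: step.IH)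
    moreover have "t q \<in> \<real>" using t(2) unfolding lc_real_def complex_is_Real_iff by blast
    ultimately show ?case using s(2)[OF step.hyps] c(3) by (simp add: F_def)
  
  qed
  moreover have "Re (s 0) > 0" using s0 t(3) unfolding c_def by simp
  ultimately show ?thesis using s(1) unfolding lc_real_def complex_is_Real_iff by blast
qed

end

definition is_sqrt :: "lc \<Rightarrow> lc \<Rightarrow> bool" where
  "is_sqrt t s \<longleftrightarrow> left_finite s \<and> lc_real s \<and> lc_nonneg s \<and> lc_mult s s = t"

lemma lc_nonneg_uminus_imp_zero:
  assumes "lc_nonneg s" "lc_nonneg (\<lambda>q. - s q)"
  shows "s = lc_zero"
proof (rule ccontr)
  assume ne: "s \<noteq> lc_zero"
  then have "(\<lambda>q. - s q) \<noteq> lc_zero" by (auto simp: lc_zero_def fun_eq_iff)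
  then obtain q q' where q: "s q \<noteq> 0" "\<forall>p<q. s p = 0" "Re (s q) > 0"
    and q': "- s q' \<noteq> 0" "\<forall>p<q'. - s p = 0" "Re (- s q') > 0"
    using assms ne unfolding lc_nonneg_def lc_pos_def by blast
  then have "q = q'" by (metis neg_equal_0_iff_equal not_less_iff_gr_or_eq)
  then show False using q(3) q'(3) by simp
qed

lemma is_sqrt_unique:
  assumes s: "is_sqrt t s" and s': "is_sqrt t s'"
  shows "s = s'"
proof -
  have lf: "left_finite s" "left_finite s'" using s s' unfolding is_sqrt_def by auto
  have "Abs_lf s * Abs_lf s = Abs_lf s' * Abs_lf s'"
    using s s' lf unfolding is_sqrt_def by (metis Rep_lf_inverse Rep_Abs_lf times_lf.rep_eq)
  then have "Abs_lf s = Abs_lf s' \<or> Abs_lf s = - Abs_lf s'" by (simp add: square_eq_iff)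
  then show ?thesis
  proof
    assume "Abs_lf s = - Abs_lf s'"
    then have "s = (\<lambda>q. - s' q)" using lf by (metis Rep_Abs_lf uminus_lf.rep_eq)
    then show ?thesis
      using lc_nonneg_uminus_imp_zero[of s'] s s' unfolding is_sqrt_def by (simp add: lc_zero_def)
  qed (use lf Rep_Abs_lf in metis)
qed

lemma lc_sqrt_eqI: "is_sqrt t s \<Longrightarrow> lc_sqrt t = s"
  unfolding lc_sqrt_def using is_sqrt_unique by (fold is_sqrt_def) blast

lemma lc_real_lc_mult: "lc_real a \<Longrightarrow> lc_real b \<Longrightarrow> lc_real (lc_mult a b)"
  unfolding lc_real_def lc_mult_def complex_is_Real_iff[symmetric]
  by (auto intro!: sum_in_Reals split: prod.splits)

lemma is_sqrt_supported:
  assumes "support_monoid M" "supported M s" "lc_real s" "Re (s 0) > 0"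
  shows "is_sqrt (lc_mult s s) s"
proof -
  have "lc_pos s" unfolding lc_pos_def
    using assms(4) supported_eq_0_negative[OF assms(1,2)] by (intro exI[of _ 0]) auto
  then show ?thesis unfolding is_sqrt_def lc_nonneg_def
    using left_finite_if_supported[OF assms(1,2)] assms(3) by simp
qed

definition lc_shift :: "rat \<Rightarrow> lc \<Rightarrow> lc" where
  "lc_shift d u = (\<lambda>q. u (q - d))"

lemma lc_mult_lc_shift: "lc_mult (lc_shift d u) (lc_shift e v) q = lc_mult u v (q - d - e)"
  unfolding lc_mult_def lc_shift_def
  by (rule sum.reindex_bij_witness[where i="\<lambda>(x, y). (x + d, y + e)" and j="\<lambda>(x, y). (x - d, y - e)"])
     (auto simp: algebra_simps)

lemma left_finite_lc_shift:
  assumes "left_finite u"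
  shows "left_finite (lc_shift d u)"
  unfolding left_finite_def
proof
  fix r
  have "{q. q < r \<and> lc_shift d u q \<noteq> 0} = (\<lambda>x. x + d) ` {x. x < r - d \<and> u x \<noteq> 0}"
    unfolding lc_shift_def by (auto intro: image_eqI[where x="_ - d"])
  then show "finite {q. q < r \<and> lc_shift d u q \<noteq> 0}"
    using assms unfolding left_finite_def by simp
qed

text \<open>A nonzero nonnegative \<open>t\<close> with leading exponent \<open>m\<close> is shifted to exponent \<open>0\<close>, where
  its square root is computed inside a support monoid, and the root is shifted back by \<open>m/2\<close>.\<close>

lemma exists_is_sqrt:
  assumes lf: "left_finite t" and re: "lc_real t" and nn: "lc_nonneg t"
  shows "\<exists>s. is_sqrt t s"
proof (cases "t = lc_zero")
  case True
  then have "is_sqrt t lc_zero"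
    unfolding is_sqrt_def using left_finite_lc_zero lc_mult_lc_zero
    by (simp add: lc_real_def lc_zero_def lc_nonneg_def)
  then show ?thesis by blast
next
  case False
  then obtain m where m: "\<forall>p<m. t p = 0" "Re (t m) > 0"
    using nn unfolding lc_nonneg_def lc_pos_def by blast
  let ?t = "lc_shift (- m) t"
  have "lc_at_most_finite ?t" using m(1) unfolding lc_at_most_finite_def lc_shift_def by simp
  then obtain M where M: "support_monoid M" "supported M ?t"
    using exists_support_monoid[of "{?t}"] left_finite_lc_shift[OF lf] by auto
  have "lc_real ?t" "Re (?t 0) > 0" using re m(2) unfolding lc_real_def lc_shift_def by simp_all
  then obtain s where s: "supported M s" "lc_real s" "Re (s 0) > 0" "lc_mult s s = ?t"
    using supported_sqrt[OF M] by blast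
  have "lc_mult (lc_shift (m / 2) s) (lc_shift (m / 2) s) q = t q" for q
    using s(4) lc_mult_lc_shift[of "m / 2" s "m / 2" s q] by (simp add: lc_shift_def)
  then have "lc_mult (lc_shift (m / 2) s) (lc_shift (m / 2) s) = t" ..
  moreover have "lc_pos (lc_shift (m / 2) s)"
    unfolding lc_pos_def lc_shift_def
    using s(3) supported_eq_0_negative[OF M(1) s(1)] by (intro exI[of _ "m / 2"]) auto
  ultimately have "is_sqrt t (lc_shift (m / 2) s)"
    unfolding is_sqrt_def lc_nonneg_def using s(2) left_finite_lc_shift[OF left_finite_if_supported[OF M(1) s(1)]]
    by (simp add: lc_real_def lc_shift_def)
  then show ?thesis by blast
qed

definition lc_abs2 :: "lc \<Rightarrow> lc" where
  "lc_abs2 z = lc_add (lc_mult (lc_re z) (lc_re z)) (lc_mult (lc_im z) (lc_im z))"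

lemma left_finite_lc_re: "left_finite a \<Longrightarrow> left_finite (lc_re a)"
  unfolding left_finite_def
proof
  fix r assume "\<forall>r. finite {q. q < r \<and> a q \<noteq> 0}"
  moreover have "{q. q < r \<and> lc_re a q \<noteq> 0} \<subseteq> {q. q < r \<and> a q \<noteq> 0}"
    unfolding lc_re_def by auto
  ultimately show "finite {q. q < r \<and> lc_re a q \<noteq> 0}" using finite_subset by blast
qed

lemma left_finite_lc_im: "left_finite a \<Longrightarrow> left_finite (lc_im a)"
  unfolding left_finite_def
proof
  fix r assume "\<forall>r. finite {q. q < r \<and> a q \<noteq> 0}"
  moreover have "{q. q < r \<and> lc_im a q \<noteq> 0} \<subseteq> {q. q < r \<and> a q \<noteq> 0}"
    unfolding lc_im_def by auto
  ultimately show "finite {q. q < r \<and> lc_im a q \<noteq> 0}" using finite_subset by blast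
qed

lemma left_finite_lc_abs2: "left_finite z \<Longrightarrow> left_finite (lc_abs2 z)"
  unfolding lc_abs2_def
  by (intro left_finite_lc_add left_finite_lc_mult left_finite_lc_re left_finite_lc_im)

lemma lc_real_lc_abs2: "lc_real (lc_abs2 z)"
  unfolding lc_abs2_def lc_add_def lc_real_def
  using lc_real_lc_mult[of "lc_re z" "lc_re z"] lc_real_lc_mult[of "lc_im z" "lc_im z"]
  by (simp add: lc_real_def lc_re_def lc_im_def)

lemma lc_nonneg_lc_abs2:
  assumes "left_finite z"
  shows "lc_nonneg (lc_abs2 z)"
proof (cases "z = lc_zero")
  case False
  then obtain q where "z q \<noteq> 0" by (auto simp: lc_zero_def)
  then obtain m where m: "z m \<noteq> 0" "\<forall>p<m. z p = 0" using left_finite_leading_coeff[OF assms] by blast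
  then have below: "\<forall>p<m. lc_re z p = 0" "\<forall>p<m. lc_im z p = 0" by (simp_all add: lc_re_def lc_im_def)
  have "Re (z m) \<noteq> 0 \<or> Im (z m) \<noteq> 0" using m(1) by (simp add: complex_eq_iff)
  then have "Re (lc_abs2 z (m + m)) > 0"
    unfolding lc_abs2_def lc_add_def lc_mult_leading[OF below(1,1)] lc_mult_leading[OF below(2,2)]
    by (simp add: lc_re_def lc_im_def sum_squares_gt_zero_iff)
  moreover have "\<forall>p<m + m. lc_abs2 z p = 0"
    unfolding lc_abs2_def lc_add_def using lc_mult_eq_0_below[OF below(1,1)] lc_mult_eq_0_below[OF below(2,2)]
    by simp
  ultimately show ?thesis unfolding lc_nonneg_def lc_pos_def
    by (metis zero_complex.sel(1) less_irrefl)
qed (simp add: lc_nonneg_def lc_abs2_def lc_mult_def lc_add_def lc_zero_def lc_re_def lc_im_def)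

lemma is_sqrt_lc_cabs: "left_finite z \<Longrightarrow> is_sqrt (lc_abs2 z) (lc_cabs z)"
  using exists_is_sqrt[of "lc_abs2 z"] lc_sqrt_eqI lc_real_lc_abs2 lc_nonneg_lc_abs2
    left_finite_lc_abs2
  unfolding lc_cabs_def lc_abs2_def[symmetric] by metis

lemma lc_norm2_eq:
  assumes "\<forall>i<n. left_finite (x i)"
  shows "lc_norm2 n x = lc_sqrt (lc_sum n (\<lambda>i. lc_abs2 (x i)))"
proof -
  have "lc_sum n (\<lambda>i. lc_mult (lc_cabs (x i)) (lc_cabs (x i))) = lc_sum n (\<lambda>i. lc_abs2 (x i))"
    unfolding lc_sum_def using is_sqrt_lc_cabs assms by (auto intro!: sum.cong simp: is_sqrt_def)
  then show ?thesis unfolding lc_norm2_def by simp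
qed

lemma supported_lc_sqrt:
  assumes "support_monoid M" "supported M t" "lc_real t" "Re (t 0) > 0"
  shows "supported M (lc_sqrt t)" "lc_real (lc_sqrt t)" "Re (lc_sqrt t 0) > 0"
    "lc_mult (lc_sqrt t) (lc_sqrt t) = t"
proof -
  obtain s where s: "supported M s" "lc_real s" "Re (s 0) > 0" "lc_mult s s = t"
    using supported_sqrt[OF assms] by blast
  then have "lc_sqrt t = s" using is_sqrt_supported[OF assms(1) s(1-3)] by (simp add: lc_sqrt_eqI)
  then show "supported M (lc_sqrt t)" "lc_real (lc_sqrt t)" "Re (lc_sqrt t 0) > 0"
    "lc_mult (lc_sqrt t) (lc_sqrt t) = t" using s by simp_all
qed

section \<open>Coefficientwise convergence\<close>

definition coeff_conv :: "(nat \<Rightarrow> lc) \<Rightarrow> lc \<Rightarrow> bool" where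
  "coeff_conv s l \<longleftrightarrow> (\<forall>q. (\<lambda>k. s k q) \<longlonglongrightarrow> l q)"

lemma coeff_conv_const: "coeff_conv (\<lambda>k. a) a"
  unfolding coeff_conv_def by simp

lemma coeff_conv_lc_add: "coeff_conv a a0 \<Longrightarrow> coeff_conv b b0 \<Longrightarrow> coeff_conv (\<lambda>k. lc_add (a k) (b k)) (lc_add a0 b0)"
  unfolding coeff_conv_def lc_add_def by (auto intro: tendsto_add)

lemma coeff_conv_lc_sub: "coeff_conv a a0 \<Longrightarrow> coeff_conv b b0 \<Longrightarrow> coeff_conv (\<lambda>k. lc_sub (a k) (b k)) (lc_sub a0 b0)"
  unfolding coeff_conv_def lc_sub_def by (auto intro: tendsto_diff)

lemma coeff_conv_lc_re: "coeff_conv a a0 \<Longrightarrow> coeff_conv (\<lambda>k. lc_re (a k)) (lc_re a0)"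
  unfolding coeff_conv_def lc_re_def
proof (intro allI)
  fix q assume "\<forall>q. (\<lambda>k. a k q) \<longlonglongrightarrow> a0 q"
  then have "(\<lambda>k. a k q) \<longlonglongrightarrow> a0 q" by blast
  then have "(\<lambda>k. Re (a k q)) \<longlonglongrightarrow> Re (a0 q)" by (rule tendsto_Re)
  then show "(\<lambda>k. complex_of_real (Re (a k q))) \<longlonglongrightarrow> complex_of_real (Re (a0 q))" by (rule tendsto_of_real)
qed

lemma coeff_conv_lc_im: "coeff_conv a a0 \<Longrightarrow> coeff_conv (\<lambda>k. lc_im (a k)) (lc_im a0)"
  unfolding coeff_conv_def lc_im_def
proof (intro allI)
  fix q assume "\<forall>q. (\<lambda>k. a k q) \<longlonglongrightarrow> a0 q"
  then have "(\<lambda>k. a k q) \<longlonglongrightarrow> a0 q" by blast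
  then have "(\<lambda>k. Im (a k q)) \<longlonglongrightarrow> Im (a0 q)" by (rule tendsto_Im)
  then show "(\<lambda>k. complex_of_real (Im (a k q))) \<longlonglongrightarrow> complex_of_real (Im (a0 q))" by (rule tendsto_of_real)
qed

lemma coeff_conv_lc_sum:
  "(\<And>j. j < n \<Longrightarrow> coeff_conv (\<lambda>k. f k j) (g j)) \<Longrightarrow> coeff_conv (\<lambda>k. lc_sum n (f k)) (lc_sum n g)"
  unfolding coeff_conv_def lc_sum_def by (auto intro!: tendsto_sum)

lemma coeff_conv_ignore_initial: "coeff_conv f l \<Longrightarrow> coeff_conv (\<lambda>k. f (k + K)) l"
  unfolding coeff_conv_def using LIMSEQ_ignore_initial_segment by blast

context
  fixes M :: "rat set"
  assumes M: "support_monoid M"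
begin

lemma coeff_conv_lc_mult:
  assumes "\<forall>k. supported M (a k)" "\<forall>k. supported M (b k)" "supported M a0" "supported M b0"
    and "coeff_conv a a0" "coeff_conv b b0"
  shows "coeff_conv (\<lambda>k. lc_mult (a k) (b k)) (lc_mult a0 b0)"
  unfolding coeff_conv_def
proof
  fix q
  have "(\<lambda>k. \<Sum>p\<in>{p\<in>M. p \<le> q}. a k p * b k (q - p)) \<longlonglongrightarrow> (\<Sum>p\<in>{p\<in>M. p \<le> q}. a0 p * b0 (q - p))"
    using assms(5,6) unfolding coeff_conv_def by (intro tendsto_sum tendsto_mult) auto
  then show "(\<lambda>k. lc_mult (a k) (b k) q) \<longlonglongrightarrow> lc_mult a0 b0 q"
    using assms(1-4) by (simp add: lc_mult_supported[OF M])
qed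

lemma coeff_conv_lc_abs2:
  assumes "\<forall>k. supported M (z k)" "supported M z0" "coeff_conv z z0"
  shows "coeff_conv (\<lambda>k. lc_abs2 (z k)) (lc_abs2 z0)"
  unfolding lc_abs2_def using assms
  by (intro coeff_conv_lc_add coeff_conv_lc_mult coeff_conv_lc_re coeff_conv_lc_im allI
      supported_lc_re[OF M] supported_lc_im[OF M]) auto

lemma coeff_conv_lc_inv:
  assumes a: "\<forall>k. supported M (a k)" "\<forall>k. a k 0 \<noteq> 0" and alim: "supported M alim" "alim 0 \<noteq> 0"
    and conv: "coeff_conv a alim"
  shows "coeff_conv (\<lambda>k. lc_inv (a k)) (lc_inv alim)"
  unfolding coeff_conv_def
proof
  fix q
  let ?b = "\<lambda>k. lc_inv (a k)" and ?blim = "lc_inv alim"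
  have b: "supported M (?b k)" "lc_mult (a k) (?b k) = lc_one" for k
    using supported_lc_inv[OF M] a by blast+
  have blim: "supported M ?blim" "lc_mult alim ?blim = lc_one"
    using supported_lc_inv[OF M alim] by blast+
  have coeff: "c q = (lc_one q - (\<Sum>p\<in>{p\<in>M. 0 < p \<and> p \<le> q}. x p * c (q - p))) / x 0"
    if "supported M x" "supported M c" "lc_mult x c = lc_one" "x 0 \<noteq> 0" "q \<in> M" for x c q
    using lc_mult_supported_at[OF M that(1,2,5)] that(3,4) by (simp add: field_simps)
  have lim: "(\<lambda>k. a k p) \<longlonglongrightarrow> alim p" for p using conv unfolding coeff_conv_def by blast
  show "(\<lambda>k. ?b k q) \<longlonglongrightarrow> ?blim q"
    using M
  proof (induction q rule: support_monoid_induct)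
    case (outside q)
    then show ?case by (simp add: supported_eq_0[OF M b(1)] supported_eq_0[OF M blim(1)])
  next
    case (step q)
    have "(\<lambda>k. (lc_one q - (\<Sum>p\<in>{p\<in>M. 0 < p \<and> p \<le> q}. a k p * ?b k (q - p))) / a k 0)
        \<longlonglongrightarrow> (lc_one q - (\<Sum>p\<in>{p\<in>M. 0 < p \<and> p \<le> q}. alim p * ?blim (q - p))) / alim 0"
      using step.IH alim(2) by (intro tendsto_intros lim) auto
    then show ?case
      using coeff[OF a(1)[rule_format] b(1) b(2) a(2)[rule_format] step.hyps]
        coeff[OF alim(1) blim(1) blim(2) alim(2) step.hyps] by simp
  qed
qed

lemma coeff_conv_lc_sqrt:
  assumes t: "\<forall>k. supported M (t k)" "\<forall>k. lc_real (t k)" "\<forall>k. Re (t k 0) > 0"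
    and tlim: "supported M tlim" "lc_real tlim" "Re (tlim 0) > 0"
    and conv: "coeff_conv t tlim"
  shows "coeff_conv (\<lambda>k. lc_sqrt (t k)) (lc_sqrt tlim)"
  unfolding coeff_conv_def
proof
  fix q
  let ?s = "\<lambda>k. lc_sqrt (t k)" and ?slim = "lc_sqrt tlim"
  have s: "supported M (?s k)" "lc_real (?s k)" "Re (?s k 0) > 0" "lc_mult (?s k) (?s k) = t k" for k
    using supported_lc_sqrt[OF M] t by blast+
  have slim: "supported M ?slim" "lc_real ?slim" "Re (?slim 0) > 0" "lc_mult ?slim ?slim = tlim"
    using supported_lc_sqrt[OF M tlim] by blast+
  have coeff0: "x 0 = complex_of_real (sqrt (Re (lc_mult x x 0)))"
    if "supported M x" "lc_real x" "Re (x 0) > 0" for x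
    using that lc_mult_supported_at_0[OF M that(1,1)] unfolding lc_real_def
    by (simp add: complex_eq_iff)
  have coeff: "x q = (lc_mult x x q - (\<Sum>p\<in>{p\<in>M. 0 < p \<and> p < q}. x p * x (q - p))) / (2 * x 0)"
    if "supported M x" "Re (x 0) > 0" "q \<in> M" "0 < q" for x q
    using lc_mult_self_supported_at[OF M that(1,3,4)] that(2) by (auto simp: field_simps)
  have lim: "(\<lambda>k. t k p) \<longlonglongrightarrow> tlim p" for p using conv unfolding coeff_conv_def by blast
  have lim0: "(\<lambda>k. ?s k 0) \<longlonglongrightarrow> ?slim 0"
    using coeff0[OF s(1-3)] coeff0[OF slim(1-3)] s(4) slim(4)
    by (simp only:) (intro tendsto_intros lim)
  show "(\<lambda>k. ?s k q) \<longlonglongrightarrow> ?slim q"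
    using M
  proof (induction q rule: support_monoid_induct)
    case (outside q)
    then show ?case by (simp add: supported_eq_0[OF M s(1)] supported_eq_0[OF M slim(1)])
  next
    case (step q)
    show ?case
    proof (cases "q = 0")
      case False
      then have "0 < q" using support_monoid_nonneg[OF M step.hyps] by simp
      have "(\<lambda>k. (t k q - (\<Sum>p\<in>{p\<in>M. 0 < p \<and> p < q}. ?s k p * ?s k (q - p))) / (2 * ?s k 0))
          \<longlonglongrightarrow> (tlim q - (\<Sum>p\<in>{p\<in>M. 0 < p \<and> p < q}. ?slim p * ?slim (q - p))) / (2 * ?slim 0)"
        using step.IH slim(3) by (intro tendsto_intros lim lim0) auto
      then show ?thesis
        using coeff[OF s(1,3) step.hyps \<open>0 < q\<close>] coeff[OF slim(1,3) step.hyps \<open>0 < q\<close>] s(4) slim(4)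
        by simp
    qed (use lim0 in simp)
  qed
qed

end

lemma tendsto_zero_linear_recurrence:
  fixes u v :: "nat \<Rightarrow> complex"
  assumes rec: "\<And>k. u (Suc k) = c * u k + v k" and c: "norm c < 1" and v: "v \<longlonglongrightarrow> 0"
  shows "u \<longlonglongrightarrow> 0"
proof (rule LIMSEQ_I)
  fix e :: real assume e: "0 < e"
  define d where "d = e * (1 - norm c) / 2"
  have d: "0 < d" "d / (1 - norm c) = e / 2" unfolding d_def using e c by (simp_all add: field_simps)
  obtain K where K0: "\<forall>k\<ge>K. norm (v k - 0) < d" using LIMSEQ_D[OF v d(1)] by blast
  then have K: "\<And>k. k \<ge> K \<Longrightarrow> norm (v k) < d" by simp
  have bound: "norm (u (K + j)) \<le> norm c ^ j * norm (u K) + d / (1 - norm c)" for j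
  proof (induction j)
    case 0
    then show ?case using d c by simp
  next
    case (Suc j)
    have "norm (u (K + Suc j)) \<le> norm c * norm (u (K + j)) + norm (v (K + j))"
      using rec norm_triangle_ineq[of "c * u (K + j)"] by (simp add: norm_mult)
    also have "\<dots> \<le> norm c * (norm c ^ j * norm (u K) + d / (1 - norm c)) + d"
      using Suc K[of "K + j"] by (intro add_mono mult_left_mono) auto
    also have "\<dots> = norm c ^ Suc j * norm (u K) + d / (1 - norm c)"
      using c by (simp add: field_simps)
    finally show ?case .
  qed
  have "(\<lambda>j. norm c ^ j * norm (u K)) \<longlonglongrightarrow> 0"
    using c by (intro tendsto_mult_left_zero LIMSEQ_power_zero) auto
  from LIMSEQ_D[OF this, of "e / 2"] e
  obtain J where "\<forall>j\<ge>J. norm (norm c ^ j * norm (u K) - 0) < e / 2" by auto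
  then have J: "\<And>j. j \<ge> J \<Longrightarrow> norm c ^ j * norm (u K) < e / 2" by simp
  have "norm (u n) < e" if "n \<ge> K + J" for n
  proof -
    have "norm (u n) \<le> norm c ^ (n - K) * norm (u K) + e / 2"
      using bound[of "n - K"] d(2) that by simp
    moreover have "norm c ^ (n - K) * norm (u K) < e / 2" using J that by simp
    ultimately show ?thesis by linarith
  qed
  then show "\<exists>N. \<forall>n\<ge>N. norm (u n - 0) < e" by auto
qed

lemma coeff_conv_power_zero:
  assumes M: "support_monoid M" and a: "supported M (Rep_lf a)" "cmod (Rep_lf a 0) < 1"
  shows "coeff_conv (\<lambda>k. Rep_lf (a ^ k)) lc_zero"
  unfolding coeff_conv_def lc_zero_def
proof
  fix q
  show "(\<lambda>k. Rep_lf (a ^ k) q) \<longlonglongrightarrow> 0"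
    using M
  proof (induction q rule: support_monoid_induct)
    case (outside q)
    then show ?case by (simp add: supported_eq_0[OF M supported_power[OF M a(1)]])
  next
    case (step q)
    let ?R = "{p\<in>M. 0 < p \<and> p \<le> q}"
    have rec: "Rep_lf (a ^ Suc k) q = Rep_lf a 0 * Rep_lf (a ^ k) q + (\<Sum>p\<in>?R. Rep_lf a p * Rep_lf (a ^ k) (q - p))"
      for k using lc_mult_supported_at[OF M a(1) supported_power[OF M a(1)] step.hyps]
      by (simp add: times_lf.rep_eq)
    have "(\<lambda>k. \<Sum>p\<in>?R. Rep_lf a p * Rep_lf (a ^ k) (q - p)) \<longlonglongrightarrow> (\<Sum>p\<in>?R. Rep_lf a p * 0)"
      using step.IH by (intro tendsto_intros) auto
    then have "(\<lambda>k. \<Sum>p\<in>?R. Rep_lf a p * Rep_lf (a ^ k) (q - p)) \<longlonglongrightarrow> 0" by simp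
    then show ?case
      by (rule tendsto_zero_linear_recurrence[where u="\<lambda>k. Rep_lf (a ^ k) q", OF rec a(2)])
  qed
qed

lemma coeff_conv_power_sum:
  fixes r W :: "nat \<Rightarrow> lf"
  assumes M: "support_monoid M" and r: "\<forall>j<n. supported M (Rep_lf (r j))" "r 0 = 1"
    "\<forall>j. 1 \<le> j \<longrightarrow> j < n \<longrightarrow> cmod (Rep_lf (r j) 0) < 1"
    and W: "\<forall>j<n. supported M (Rep_lf (W j))" and n: "0 < n"
  shows "coeff_conv (\<lambda>k. Rep_lf (\<Sum>j<n. r j ^ k * W j)) (Rep_lf (W 0))"
proof -
  have "coeff_conv (\<lambda>k. Rep_lf (r j ^ k * W j)) (if j = 0 then Rep_lf (W 0) else lc_zero)"
    if "j < n" for j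
  proof (cases "j = 0")
    case False
    have "coeff_conv (\<lambda>k. Rep_lf (r j ^ k)) lc_zero"
    proof (rule coeff_conv_power_zero[OF M])
      show "supported M (Rep_lf (r j))" using that r(1) by blast
      show "cmod (Rep_lf (r j) 0) < 1" using that False r(3) by simp
    qed
    then have "coeff_conv (\<lambda>k. lc_mult (Rep_lf (r j ^ k)) (Rep_lf (W j))) (lc_mult lc_zero (Rep_lf (W j)))"
      using that r(1) W coeff_conv_const supported_power[OF M] supported_lc_zero[OF M]
      by (intro coeff_conv_lc_mult[OF M]) auto
    then show ?thesis using False by (simp add: times_lf.rep_eq lc_mult_lc_zero)
  qed (simp add: r(2) coeff_conv_const)
  then have "coeff_conv (\<lambda>k. lc_sum n (\<lambda>j. Rep_lf (r j ^ k * W j)))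
      (lc_sum n (\<lambda>j. if j = 0 then Rep_lf (W 0) else lc_zero))"
    by (rule coeff_conv_lc_sum)
  moreover have "lc_sum n (\<lambda>j. if j = 0 then Rep_lf (W 0) else lc_zero) = Rep_lf (W 0)"
  proof
    fix q
    have "(\<Sum>j<n. (if j = 0 then Rep_lf (W 0) else lc_zero) q) = (\<Sum>j<n. if j = 0 then Rep_lf (W 0) q else 0)"
      by (intro sum.cong) (simp_all add: lc_zero_def)
    then show "lc_sum n (\<lambda>j. if j = 0 then Rep_lf (W 0) else lc_zero) q = Rep_lf (W 0) q"
      using n by (simp add: lc_sum_def)
  qed
  ultimately show ?thesis by (simp add: Rep_lf_sum)
qed

section \<open>Normalisation\<close>

lemmas lc_ops_Rep_lf = times_lf.rep_eq[symmetric] plus_lf.rep_eq[symmetric] Rep_lf_inject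

lemma ex_Rep_lf: "left_finite a \<Longrightarrow> \<exists>A. a = Rep_lf A"
  using Rep_Abs_lf by metis

lemma lc_real_Rep_lf_power: "lc_real (Rep_lf a) \<Longrightarrow> lc_real (Rep_lf (a ^ k))"
proof (induction k)
  case 0
  then show ?case by (simp add: one_lf.rep_eq lc_real_def lc_one_def)
qed (simp add: times_lf.rep_eq lc_real_lc_mult)

context
  fixes M :: "rat set"
  assumes M: "support_monoid M"
begin

lemma Rep_lf_power_at_0: "supported M (Rep_lf a) \<Longrightarrow> Rep_lf (a ^ k) 0 = Rep_lf a 0 ^ k"
  by (induction k)
    (simp_all add: one_lf.rep_eq lc_one_def times_lf.rep_eq lc_mult_supported_at_0[OF M] supported_power[OF M])

lemma lc_re_lc_mult_real:
  assumes c: "supported M c" "lc_real c" and z: "supported M z"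
  shows "lc_re (lc_mult c z) = lc_mult c (lc_re z)" "lc_im (lc_mult c z) = lc_mult c (lc_im z)"
proof -
  show "lc_re (lc_mult c z) = lc_mult c (lc_re z)"
  proof
    fix q
    have "lc_re (lc_mult c z) q = complex_of_real (Re (\<Sum>p\<in>{p\<in>M. p \<le> q}. c p * z (q - p)))"
      unfolding lc_re_def using lc_mult_supported[OF M c(1) z] by simp
    also have "\<dots> = (\<Sum>p\<in>{p\<in>M. p \<le> q}. c p * lc_re z (q - p))"
      unfolding lc_re_def of_real_sum Re_sum
    proof (rule sum.cong[OF refl])
      fix p
      have "Im (c p) = 0" using c(2) unfolding lc_real_def by blast
      then show "complex_of_real (Re (c p * z (q - p))) = c p * complex_of_real (Re (z (q - p)))"
        by (simp add: complex_eq_iff)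
    qed
    also have "\<dots> = lc_mult c (lc_re z) q" using lc_mult_supported[OF M c(1) supported_lc_re[OF M z]] by simp
    finally show "lc_re (lc_mult c z) q = lc_mult c (lc_re z) q" .
  qed
  show "lc_im (lc_mult c z) = lc_mult c (lc_im z)"
  proof
    fix q
    have "lc_im (lc_mult c z) q = complex_of_real (Im (\<Sum>p\<in>{p\<in>M. p \<le> q}. c p * z (q - p)))"
      unfolding lc_im_def using lc_mult_supported[OF M c(1) z] by simp
    also have "\<dots> = (\<Sum>p\<in>{p\<in>M. p \<le> q}. c p * lc_im z (q - p))"
      unfolding lc_im_def of_real_sum Im_sum
    proof (rule sum.cong[OF refl])
      fix p
      have "Im (c p) = 0" using c(2) unfolding lc_real_def by blast
      then show "complex_of_real (Im (c p * z (q - p))) = c p * complex_of_real (Im (z (q - p)))"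
        by (simp add: complex_eq_iff)
    qed
    also have "\<dots> = lc_mult c (lc_im z) q" using lc_mult_supported[OF M c(1) supported_lc_im[OF M z]] by simp
    finally show "lc_im (lc_mult c z) q = lc_mult c (lc_im z) q" .
  qed
qed

lemma lc_abs2_lc_mult_real:
  assumes "supported M c" "lc_real c" "supported M z"
  shows "lc_abs2 (lc_mult c z) = lc_mult (lc_mult c c) (lc_abs2 z)"
proof -
  obtain C where "c = Rep_lf C" using ex_Rep_lf left_finite_if_supported[OF M assms(1)] by blast
  moreover obtain R where "lc_re z = Rep_lf R"
    using ex_Rep_lf left_finite_if_supported[OF M supported_lc_re[OF M assms(3)]] by blast
  moreover obtain I where "lc_im z = Rep_lf I"
    using ex_Rep_lf left_finite_if_supported[OF M supported_lc_im[OF M assms(3)]] by blast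
  ultimately show ?thesis
    unfolding lc_abs2_def lc_re_lc_mult_real[OF assms] by (simp add: lc_ops_Rep_lf algebra_simps)
qed

lemma Re_lc_abs2_at_0:
  assumes "supported M z"
  shows "Re (lc_abs2 z 0) = (cmod (z 0))\<^sup>2"
proof -
  have "lc_abs2 z 0 = lc_re z 0 * lc_re z 0 + lc_im z 0 * lc_im z 0"
    unfolding lc_abs2_def lc_add_def
    using lc_mult_supported_at_0[OF M supported_lc_re[OF M assms] supported_lc_re[OF M assms]]
      lc_mult_supported_at_0[OF M supported_lc_im[OF M assms] supported_lc_im[OF M assms]]
    by simp
  moreover have "(cmod (z 0))\<^sup>2 = (Re (z 0))\<^sup>2 + (Im (z 0))\<^sup>2" by (rule cmod_power2)
  ultimately show ?thesis unfolding lc_re_def lc_im_def by (simp add: power2_eq_square)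
qed

end

lemma left_finite_lc_sum: "(\<And>i. i < n \<Longrightarrow> left_finite (f i)) \<Longrightarrow> left_finite (lc_sum n f)"
proof (induction n)
  case 0
  then show ?case using left_finite_lc_zero by (simp add: lc_sum_def lc_zero_def)
next
  case (Suc n)
  then have "left_finite (lc_add (lc_sum n f) (f n))" by (simp add: left_finite_lc_add)
  then show ?case by (simp add: lc_sum_def lc_add_def)
qed

lemma lc_mult_lc_sum:
  assumes "left_finite a" "\<And>i. i < n \<Longrightarrow> left_finite (f i)"
  shows "lc_mult a (lc_sum n f) = lc_sum n (\<lambda>i. lc_mult a (f i))"
  using assms(2)
proof (induction n)
  case 0
  then show ?case using lc_mult_lc_zero lc_mult_commute by (simp add: lc_sum_def lc_zero_def)
next
  case (Suc n)
  have "lc_sum (Suc n) g = lc_add (lc_sum n g) (g n)" for g by (simp add: lc_sum_def lc_add_def)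
  then show ?case
    using Suc lc_mult_lc_add_right[OF assms(1) left_finite_lc_sum] by (simp add: lc_add_def)
qed

lemma lc_inv_mult_cancel:
  assumes "left_finite c" "left_finite s" "left_finite y" "left_finite x" "left_finite s'"
    and "lc_mult (lc_mult c s) x = lc_one" "lc_mult s s' = lc_one"
  shows "lc_mult x (lc_mult c y) = lc_mult s' y"
proof -
  obtain C S Y X S' where reps: "c = Rep_lf C" "s = Rep_lf S" "y = Rep_lf Y" "x = Rep_lf X" "s' = Rep_lf S'"
    using assms(1-5) ex_Rep_lf by meson
  have CSX: "C * S * X = 1" and SS': "S * S' = 1"
    using assms(6,7) reps by (simp_all add: lc_ops_Rep_lf flip: one_lf.rep_eq)
  have "X * (C * Y) = X * (C * Y) * (S * S')" using SS' by simp
  also have "\<dots> = (C * S * X) * (S' * Y)" by (simp add: ac_simps)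
  finally have "X * (C * Y) = S' * Y" using CSX by simp
  then show ?thesis using reps by (simp add: lc_ops_Rep_lf)
qed

context
  fixes M :: "rat set"
  assumes M: "support_monoid M"
begin

lemma supported_lc_abs2: "supported M z \<Longrightarrow> supported M (lc_abs2 z)"
  unfolding lc_abs2_def
  by (intro supported_lc_add supported_lc_mult supported_lc_re supported_lc_im M)

lemma lc_sum_lc_abs2_supported:
  assumes y: "\<forall>i<n. supported M (y i)" and nz: "\<exists>i<n. y i 0 \<noteq> 0"
  shows "supported M (lc_sum n (\<lambda>i. lc_abs2 (y i)))" "lc_real (lc_sum n (\<lambda>i. lc_abs2 (y i)))"
    "Re (lc_sum n (\<lambda>i. lc_abs2 (y i)) 0) > 0"
proof -
  show "supported M (lc_sum n (\<lambda>i. lc_abs2 (y i)))"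
    using y by (intro supported_lc_sum[OF M] supported_lc_abs2) auto
  show "lc_real (lc_sum n (\<lambda>i. lc_abs2 (y i)))"
    using lc_real_lc_abs2 unfolding lc_real_def lc_sum_def by (simp add: Im_sum)
  obtain i where i: "i < n" "y i 0 \<noteq> 0" using nz by blast
  have "Re (lc_sum n (\<lambda>i. lc_abs2 (y i)) 0) = (\<Sum>i<n. (cmod (y i 0))\<^sup>2)"
    unfolding lc_sum_def Re_sum using y by (intro sum.cong) (simp_all add: Re_lc_abs2_at_0[OF M])
  also have "\<dots> > 0" using i by (intro sum_pos2[of _ i]) auto
  finally show "Re (lc_sum n (\<lambda>i. lc_abs2 (y i)) 0) > 0" .
qed

lemma lc_norm2_supported_eq:
  "\<forall>i<n. supported M (y i) \<Longrightarrow> lc_norm2 n y = lc_sqrt (lc_sum n (\<lambda>i. lc_abs2 (y i)))"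
  using left_finite_if_supported[OF M] by (intro lc_norm2_eq) blast

lemma lc_norm2_supported:
  assumes "\<forall>i<n. supported M (y i)" "\<exists>i<n. y i 0 \<noteq> 0"
  shows "supported M (lc_norm2 n y)" "lc_real (lc_norm2 n y)" "Re (lc_norm2 n y 0) > 0"
    "lc_mult (lc_norm2 n y) (lc_norm2 n y) = lc_sum n (\<lambda>i. lc_abs2 (y i))"
  unfolding lc_norm2_supported_eq[OF assms(1)]
  using supported_lc_sqrt[OF M lc_sum_lc_abs2_supported[OF assms]] by simp_all

lemma lc_normalize_supported:
  assumes "\<forall>i<n. supported M (y i)" "\<exists>i<n. y i 0 \<noteq> 0" "i < n"
  shows "supported M (lc_normalize n y i)"
proof -
  have "lc_norm2 n y 0 \<noteq> 0" using lc_norm2_supported(3)[OF assms(1,2)] by auto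
  then show ?thesis unfolding lc_normalize_def using assms
    by (intro supported_lc_mult[OF M] supported_lc_inv(1)[OF M] lc_norm2_supported(1)) auto
qed

lemma coeff_conv_lc_normalize:
  assumes y: "\<forall>k. \<forall>i<n. supported M (y k i)" "\<forall>k. \<exists>i<n. y k i 0 \<noteq> 0"
    and l: "\<forall>i<n. supported M (l i)" "\<exists>i<n. l i 0 \<noteq> 0"
    and conv: "\<forall>i<n. coeff_conv (\<lambda>k. y k i) (l i)" and i: "i < n"
  shows "coeff_conv (\<lambda>k. lc_normalize n (y k) i) (lc_normalize n l i)"
proof -
  have yk: "\<forall>i<n. supported M (y k i)" "\<exists>i<n. y k i 0 \<noteq> 0" for k using y by blast+
  have nz: "\<And>k. lc_norm2 n (y k) 0 \<noteq> 0" "lc_norm2 n l 0 \<noteq> 0"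
    using lc_norm2_supported(3)[OF yk] lc_norm2_supported(3)[OF l] by (metis less_irrefl zero_complex.sel(1))+
  have "coeff_conv (\<lambda>k. lc_sum n (\<lambda>i. lc_abs2 (y k i))) (lc_sum n (\<lambda>i. lc_abs2 (l i)))"
    using y(1) l(1) conv by (intro coeff_conv_lc_sum coeff_conv_lc_abs2[OF M]) auto
  then have "coeff_conv (\<lambda>k. lc_norm2 n (y k)) (lc_norm2 n l)"
    using coeff_conv_lc_sqrt[OF M _ _ _ lc_sum_lc_abs2_supported[OF l]]
      lc_sum_lc_abs2_supported[OF yk] lc_norm2_supported_eq y(1) l(1) by simp
  then have "coeff_conv (\<lambda>k. lc_inv (lc_norm2 n (y k))) (lc_inv (lc_norm2 n l))"
    using lc_norm2_supported(1)[OF yk] lc_norm2_supported(1)[OF l] nz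
    by (intro coeff_conv_lc_inv[OF M]) auto
  then show ?thesis
    unfolding lc_normalize_def using conv i y(1) l(1) lc_norm2_supported(1)[OF yk]
      lc_norm2_supported(1)[OF l] supported_lc_inv(1)[OF M] nz
    by (intro coeff_conv_lc_mult[OF M]) auto
qed

text \<open>Rescaling by a real series with positive constant coefficient does not change the
  normalised vector: the norm picks up the same factor, because square roots with positive
  constant coefficient are unique.\<close>

lemma lc_normalize_mult_real:
  assumes c: "supported M c" "lc_real c" "Re (c 0) > 0"
    and y: "\<forall>i<n. supported M (y i)" "\<exists>i<n. y i 0 \<noteq> 0" and i: "i < n"
  shows "lc_normalize n (\<lambda>i. lc_mult c (y i)) i = lc_normalize n y i"
proof -
  let ?s = "lc_norm2 n y"
  have s: "supported M ?s" "lc_real ?s" "Re (?s 0) > 0" "lc_mult ?s ?s = lc_sum n (\<lambda>i. lc_abs2 (y i))"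
    using lc_norm2_supported[OF y(1,2)] by blast+
  have lf: "left_finite c" "left_finite ?s"
    using left_finite_if_supported[OF M] c(1) s(1) by blast+
  have z: "\<forall>i<n. supported M (lc_mult c (y i))" using c(1) y(1) supported_lc_mult[OF M] by blast
  have cs: "supported M (lc_mult c ?s)" "lc_real (lc_mult c ?s)" "Re (lc_mult c ?s 0) > 0"
    using supported_lc_mult[OF M c(1) s(1)] lc_real_lc_mult[OF c(2) s(2)] c(2,3) s(2,3)
      lc_mult_supported_at_0[OF M c(1) s(1)] unfolding lc_real_def by simp_all
  have "lc_sum n (\<lambda>i. lc_abs2 (lc_mult c (y i))) = lc_sum n (\<lambda>i. lc_mult (lc_mult c c) (lc_abs2 (y i)))"
    unfolding lc_sum_def using y(1) lc_abs2_lc_mult_real[OF M c(1,2)] by simp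
  also have "\<dots> = lc_mult (lc_mult c c) (lc_mult ?s ?s)"
    unfolding s(4) using y(1) lf c(1)
    by (intro lc_mult_lc_sum[symmetric] left_finite_lc_mult left_finite_lc_abs2
        left_finite_if_supported[OF M]) auto
  also have "\<dots> = lc_mult (lc_mult c ?s) (lc_mult c ?s)"
  proof -
    obtain C S where "c = Rep_lf C" "?s = Rep_lf S" using ex_Rep_lf lf by meson
    then show ?thesis by (simp add: lc_ops_Rep_lf algebra_simps)
  qed
  finally have norm: "lc_norm2 n (\<lambda>i. lc_mult c (y i)) = lc_mult c ?s"
    using lc_norm2_supported_eq[OF z] lc_sqrt_eqI[OF is_sqrt_supported[OF M cs]] by simp
  have "lc_mult c ?s 0 \<noteq> 0" "?s 0 \<noteq> 0" using cs(3) s(3) by auto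
  then show ?thesis
    unfolding lc_normalize_def norm
    using supported_lc_inv[OF M cs(1)] supported_lc_inv[OF M s(1)] lf y(1) i
    by (intro lc_inv_mult_cancel) (auto intro: left_finite_if_supported[OF M])
qed

end

section \<open>Weak convergence\<close>

lemma finite_support_monoid_of_rat_le:
  assumes "support_monoid M"
  shows "finite {q\<in>M. real_of_rat q \<le> t}"
proof (rule finite_subset[OF _ support_monoid_finite_below[OF assms, of "of_int \<lceil>t\<rceil> + 1"]])
  have "real_of_rat q < real_of_rat (of_int \<lceil>t\<rceil> + 1)" if "real_of_rat q \<le> t" for q
  proof -
    have "real_of_rat (of_int \<lceil>t\<rceil> + 1) = of_int \<lceil>t\<rceil> + 1" by (simp add: of_rat_add)
    then show ?thesis using that le_of_int_ceiling[of t] by linarith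
  qed
  then show "{q\<in>M. real_of_rat q \<le> t} \<subseteq> {q\<in>M. q < of_int \<lceil>t\<rceil> + 1}"
    by (auto simp: of_rat_less)
qed

lemma lc_seminorm_le_sum:
  assumes "support_monoid M" "supported M d" "0 \<le> t"
  shows "lc_seminorm t d \<le> (\<Sum>q\<in>{q\<in>M. real_of_rat q \<le> t}. cmod (d q))"
  unfolding lc_seminorm_def
proof (rule cSup_least)
  show "{cmod (d q) |q. real_of_rat q \<le> t} \<noteq> {}" using assms(3) by (auto intro!: exI[of _ 0])
  fix x assume "x \<in> {cmod (d q) |q. real_of_rat q \<le> t}"
  then obtain q where q: "x = cmod (d q)" "real_of_rat q \<le> t" by blast
  show "x \<le> (\<Sum>q\<in>{q\<in>M. real_of_rat q \<le> t}. cmod (d q))"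
  proof (cases "q \<in> M")
    case True
    then show ?thesis using q finite_support_monoid_of_rat_le[OF assms(1)]
      by (auto intro: member_le_sum)
  qed (use q supported_eq_0[OF assms(1,2)] in \<open>simp add: sum_nonneg\<close>)
qed

lemma lc_wk_conv_if_coeff_conv:
  assumes M: "support_monoid M" and s: "\<forall>k. supported M (s k)" "supported M l" and conv: "coeff_conv s l"
  shows "lc_wk_conv s l"
  unfolding lc_wk_conv_def
proof (intro allI impI)
  fix r :: real assume r: "r > 0"
  let ?Q = "{q\<in>M. real_of_rat q \<le> 1 / r}"
  have "coeff_conv (\<lambda>k. lc_sub (s k) l) (lc_sub l l)" using conv coeff_conv_const by (rule coeff_conv_lc_sub)
  then have "(\<lambda>k. \<Sum>q\<in>?Q. cmod (lc_sub (s k) l q)) \<longlonglongrightarrow> (\<Sum>q\<in>?Q. 0)"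
    unfolding coeff_conv_def lc_sub_def by (intro tendsto_sum tendsto_norm_zero) auto
  then have "(\<lambda>k. \<Sum>q\<in>?Q. cmod (lc_sub (s k) l q)) \<longlonglongrightarrow> 0" by simp
  then have "eventually (\<lambda>k. (\<Sum>q\<in>?Q. cmod (lc_sub (s k) l q)) < r) sequentially"
    using r by (rule order_tendstoD(2))
  then obtain N where N: "\<forall>k\<ge>N. (\<Sum>q\<in>?Q. cmod (lc_sub (s k) l q)) < r"
    unfolding eventually_sequentially by blast
  have "lc_seminorm (1 / r) (lc_sub (s k) l) < r" if "k > N" for k
  proof -
    have "lc_seminorm (1 / r) (lc_sub (s k) l) \<le> (\<Sum>q\<in>?Q. cmod (lc_sub (s k) l q))"
      using lc_seminorm_le_sum[OF M supported_lc_sub[OF M s(1)[rule_format] s(2)]] r by simp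
    also have "\<dots> < r" using N that by simp
    finally show ?thesis .
  qed
  then show "\<exists>N0. \<forall>k>N0. lc_seminorm (1 / r) (lc_sub (s k) l) < r" by blast
qed

lemma lc_wk_conv_ignore_initial: "lc_wk_conv (\<lambda>k. s (k + K)) l \<Longrightarrow> lc_wk_conv s l"
  unfolding lc_wk_conv_def
proof (intro allI impI)
  fix r :: real assume "\<forall>r>0. \<exists>N0. \<forall>k>N0. lc_seminorm (1 / r) (lc_sub (s (k + K)) l) < r" "r > 0"
  then obtain N0 where N0: "\<forall>k>N0. lc_seminorm (1 / r) (lc_sub (s (k + K)) l) < r" by blast
  have "lc_seminorm (1 / r) (lc_sub (s k) l) < r" if "k > N0 + K" for k
    using N0[rule_format, of "k - K"] that by simp
  then show "\<exists>N0. \<forall>k>N0. lc_seminorm (1 / r) (lc_sub (s k) l) < r" by blast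
qed

section \<open>The power method\<close>

lemma lc_mat_vec_power_eigen:
  assumes A: "\<forall>i<n. \<forall>l<n. left_finite (A i l)" and nu: "\<forall>j<n. left_finite (nu j)"
    and w: "\<forall>j<n. \<forall>i<n. left_finite (w j i)"
    and eig: "\<forall>j<n. \<forall>i<n. lc_mat_vec n A (w j) i = lc_mult (nu j) (w j i)"
    and x: "\<forall>i<n. x i = lc_sum n (\<lambda>j. w j i)"
  shows "i < n \<Longrightarrow> (lc_mat_vec n A ^^ k) x i = Rep_lf (\<Sum>j<n. Abs_lf (nu j) ^ k * Abs_lf (w j i))"
proof (induction k arbitrary: i)
  case 0
  then show ?case using x w by (simp add: Rep_lf_sum Rep_Abs_lf lc_sum_def)
next
  case (Suc k)
  let ?A = "\<lambda>i l. Abs_lf (A i l)" and ?N = "\<lambda>j. Abs_lf (nu j)" and ?W = "\<lambda>j i. Abs_lf (w j i)"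
  have eig': "(\<Sum>l<n. ?A i l * ?W j l) = ?N j * ?W j i" if "j < n" "i < n" for j i
  proof -
    have "Rep_lf (\<Sum>l<n. ?A i l * ?W j l) = lc_mat_vec n A (w j) i"
      unfolding Rep_lf_sum lc_mat_vec_def lc_sum_def using that A w
      by (intro ext sum.cong) (simp_all add: times_lf.rep_eq Rep_Abs_lf)
    then show ?thesis using eig that nu w by (simp add: Rep_lf_inject[symmetric] times_lf.rep_eq Rep_Abs_lf)
  qed
  have "(lc_mat_vec n A ^^ Suc k) x i = lc_sum n (\<lambda>l. lc_mult (A i l) ((lc_mat_vec n A ^^ k) x l))"
    by (simp add: lc_mat_vec_def)
  also have "\<dots> = Rep_lf (\<Sum>l<n. ?A i l * (\<Sum>j<n. ?N j ^ k * ?W j l))"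
    unfolding Rep_lf_sum lc_sum_def using Suc A
    by (intro ext sum.cong) (simp_all add: times_lf.rep_eq Rep_Abs_lf)
  also have "(\<Sum>l<n. ?A i l * (\<Sum>j<n. ?N j ^ k * ?W j l)) = (\<Sum>j<n. ?N j ^ k * (\<Sum>l<n. ?A i l * ?W j l))"
    unfolding sum_distrib_left by (subst sum.swap) (simp add: ac_simps)
  also have "\<dots> = (\<Sum>j<n. ?N j ^ Suc k * ?W j i)"
    using Suc.prems eig' by (intro sum.cong) (simp_all add: ac_simps)
  finally show ?case .
qed

text \<open>Dividing by the dominant eigenvalue: \<open>\<Sum>\<^sub>j N\<^sub>j\<^sup>k W\<^sub>j = N\<^sub>0\<^sup>k \<Sum>\<^sub>j \<rho>\<^sub>j\<^sup>k W\<^sub>j\<close> with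
  \<open>\<rho>\<^sub>j = N\<^sub>j/N\<^sub>0\<close>, whose constant coefficients are those of the \<open>N\<^sub>j\<close> since \<open>N\<^sub>0[0] = 1\<close>.\<close>

lemma power_sum_factor_dominant:
  fixes N :: "nat \<Rightarrow> lf" and W :: "nat \<Rightarrow> nat \<Rightarrow> lf"
  assumes M: "support_monoid M" and N: "\<forall>j<n. supported M (Rep_lf (N j))" "Rep_lf (N 0) 0 = 1"
    "\<forall>j. 1 \<le> j \<longrightarrow> j < n \<longrightarrow> cmod (Rep_lf (N j) 0) < 1"
    and W: "\<forall>j<n. \<forall>i<n. supported M (Rep_lf (W j i))" and n: "0 < n"
  shows "\<exists>Y. \<forall>i<n. (\<forall>k. (\<Sum>j<n. N j ^ k * W j i) = N 0 ^ k * Y k i \<and> supported M (Rep_lf (Y k i))) \<and>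
    coeff_conv (\<lambda>k. Rep_lf (Y k i)) (Rep_lf (W 0 i))"
proof -
  have N0: "supported M (Rep_lf (N 0))" "Rep_lf (N 0) 0 \<noteq> 0" using N n by auto
  define I where "I = Abs_lf (lc_inv (Rep_lf (N 0)))"
  have I: "supported M (Rep_lf I)" "N 0 * I = 1"
    using supported_lc_inv[OF M N0] left_finite_if_supported[OF M]
    by (simp_all add: I_def Rep_Abs_lf Rep_lf_inject[symmetric] times_lf.rep_eq one_lf.rep_eq)
  define r where "r j = N j * I" for j
  have r: "\<forall>j<n. supported M (Rep_lf (r j))" "r 0 = 1" "\<forall>j<n. Rep_lf (r j) 0 = Rep_lf (N j) 0"
  proof -
    show "\<forall>j<n. supported M (Rep_lf (r j))" "r 0 = 1"
      using N(1) I by (simp_all add: r_def times_lf.rep_eq supported_lc_mult[OF M])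
    have "lc_mult (Rep_lf (N 0)) (Rep_lf I) = lc_one" using I(2) by (metis one_lf.rep_eq times_lf.rep_eq)
    then have "Rep_lf I 0 = 1"
      using lc_mult_supported_at_0[OF M N0(1) I(1)] N(2) by (simp add: lc_one_def)
    then show "\<forall>j<n. Rep_lf (r j) 0 = Rep_lf (N j) 0"
      using N(1) I(1) by (simp add: r_def times_lf.rep_eq lc_mult_supported_at_0[OF M])
  qed
  define Y where "Y k i = (\<Sum>j<n. r j ^ k * W j i)" for k i
  have "N 0 * r j = N j * (N 0 * I)" for j by (simp add: r_def ac_simps)
  then have pow: "N j ^ k = N 0 ^ k * r j ^ k" for j k using I(2) by (simp flip: power_mult_distrib)
  have "(\<Sum>j<n. N j ^ k * W j i) = N 0 ^ k * Y k i" for k i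
    unfolding Y_def sum_distrib_left by (intro sum.cong refl) (subst pow, simp add: ac_simps)
  moreover have "supported M (Rep_lf (Y k i))" if "i < n" for k i
    using r(1) W that
    by (auto simp: Y_def Rep_lf_sum times_lf.rep_eq intro!: supported_lc_sum[OF M] supported_lc_mult[OF M]
        supported_power[OF M])
  moreover have "coeff_conv (\<lambda>k. Rep_lf (Y k i)) (Rep_lf (W 0 i))" if "i < n" for i
    unfolding Y_def using r N(3) W that n by (intro coeff_conv_power_sum[OF M]) auto
  ultimately show ?thesis by blast
qed

lemma lc_normalize_cong: "(\<And>i. i < n \<Longrightarrow> x i = y i) \<Longrightarrow> i < n \<Longrightarrow> lc_normalize n x i = lc_normalize n y i"
  unfolding lc_normalize_def lc_norm2_def lc_sum_def by simp

lemma lc_vec_wk_conv_normalize: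
  assumes M: "support_monoid M"
    and y: "\<forall>k. \<forall>i<n. supported M (y k i)" and l: "\<forall>i<n. supported M (l i)" "\<exists>i<n. l i 0 \<noteq> 0"
    and conv: "\<forall>i<n. coeff_conv (\<lambda>k. y k i) (l i)"
    and c: "\<forall>k. supported M (c k) \<and> lc_real (c k) \<and> Re (c k 0) > 0"
    and x: "\<forall>k. \<forall>i<n. x k i = lc_mult (c k) (y k i)"
  shows "lc_vec_wk_conv n (\<lambda>k. lc_normalize n (x k)) (lc_normalize n l)"
  unfolding lc_vec_wk_conv_def
proof (intro allI impI)
  fix i assume i: "i < n"
  obtain i0 where i0: "i0 < n" "l i0 0 \<noteq> 0" using l(2) by blast
  have "(\<lambda>k. y k i0 0) \<longlonglongrightarrow> l i0 0" using conv i0(1) unfolding coeff_conv_def by blast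
  then have "eventually (\<lambda>k. y k i0 0 \<noteq> 0) sequentially" using i0(2) by (rule tendsto_imp_eventually_ne)
  then obtain K where K: "\<forall>k\<ge>K. y k i0 0 \<noteq> 0" unfolding eventually_sequentially by blast
  let ?y = "\<lambda>k. y (k + K)"
  have y': "\<forall>k. \<forall>i<n. supported M (?y k i)" "\<forall>k. \<exists>i<n. ?y k i 0 \<noteq> 0"
    using y K i0(1) by auto
  then have yk: "\<forall>i<n. supported M (?y k i)" "\<exists>i<n. ?y k i 0 \<noteq> 0" for k by blast+
  have "lc_normalize n (x (k + K)) i = lc_normalize n (?y k) i" for k
    using lc_normalize_cong[of n "x (k + K)" "\<lambda>i. lc_mult (c (k + K)) (?y k i)"] x i
      lc_normalize_mult_real[OF M _ _ _ yk i] c by simp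
  moreover have "coeff_conv (\<lambda>k. lc_normalize n (?y k) i) (lc_normalize n l i)"
    using conv coeff_conv_ignore_initial by (intro coeff_conv_lc_normalize[OF M y' l _ i]) blast
  ultimately have "lc_wk_conv (\<lambda>k. lc_normalize n (x (k + K)) i) (lc_normalize n l i)"
    using lc_normalize_supported[OF M yk i]
      lc_normalize_supported[OF M l i]
    by (intro lc_wk_conv_if_coeff_conv[OF M]) auto
  then show "lc_wk_conv (\<lambda>k. lc_normalize n (x k) i) (lc_normalize n l i)"
    by (rule lc_wk_conv_ignore_initial)
qed

lemma antimono_on_le_first:
  fixes f :: "nat \<Rightarrow> real"
  assumes "\<forall>j. j + 1 < n \<longrightarrow> j \<ge> 1 \<longrightarrow> f (j + 1) \<le> f j"
  shows "1 \<le> j \<Longrightarrow> j < n \<Longrightarrow> f j \<le> f 1"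
proof (induction j)
  case (Suc j)
  show ?case
  proof (cases "j = 0")
    case False
    then have "f (Suc j) \<le> f j" "f j \<le> f 1" using Suc assms by simp_all
    then show ?thesis by linarith
  qed simp
qed simp

theorem mainTheorem8:
  fixes n :: nat and A :: "nat \<Rightarrow> nat \<Rightarrow> lc" and nu :: "nat \<Rightarrow> lc"
    and x :: "nat \<Rightarrow> lc" and w :: "nat \<Rightarrow> nat \<Rightarrow> lc"
  assumes n_pos: "n \<ge> 1"
    and A_in: "\<forall>i<n. \<forall>j<n. left_finite (A i j)"
    and diag: "lc_diagonalizable_with n A nu"
    and nu_in: "\<forall>j<n. left_finite (nu j) \<and> lc_real (nu j)"
    and nu_fin: "\<forall>j<n. lc_at_most_finite (nu j)"
    and nu_dom: "nu 0 0 = 1" "n \<ge> 2 \<longrightarrow> 1 > \<bar>Re (nu 1 0)\<bar>"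
    and nu_ord: "\<forall>j. j + 1 < n \<longrightarrow> j \<ge> 1 \<longrightarrow> \<bar>Re (nu j 0)\<bar> \<ge> \<bar>Re (nu (j + 1) 0)\<bar>"
    and w_in: "\<forall>j<n. \<forall>i<n. left_finite (w j i)"
    and x_decomp: "\<forall>i<n. x i = lc_sum n (\<lambda>j. w j i)"
    and w_eig: "\<forall>j<n. \<forall>i<n. lc_mat_vec n A (w j) i = lc_mult (nu j) (w j i)"
    and w_fin: "\<forall>j<n. \<forall>i<n. lc_at_most_finite (w j i)"
    and w1_nz: "\<exists>i<n. w 0 i 0 \<noteq> 0"
  shows "lc_vec_wk_conv n
           (\<lambda>k. lc_normalize n ((lc_mat_vec n A ^^ k) x))
           (lc_normalize n (w 0))"
proof -
  have n: "0 < n" using n_pos by simp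
  let ?F = "nu ` {..<n} \<union> (\<lambda>(j, i). w j i) ` ({..<n} \<times> {..<n})"
  obtain M where M: "support_monoid M" and F: "\<forall>a\<in>?F. supported M a"
    using exists_support_monoid[of ?F] nu_in nu_fin w_in w_fin by fastforce
  then have nuM: "\<forall>j<n. supported M (nu j)" and wM: "\<forall>j<n. \<forall>i<n. supported M (w j i)" by auto
  let ?N = "\<lambda>j. Abs_lf (nu j)" and ?W = "\<lambda>j i. Abs_lf (w j i)"
  have RN: "\<And>j. j < n \<Longrightarrow> Rep_lf (?N j) = nu j" and RW: "\<And>j i. j < n \<Longrightarrow> i < n \<Longrightarrow> Rep_lf (?W j i) = w j i"
    using nu_in w_in by (simp_all add: Rep_Abs_lf)
  have "cmod (nu j 0) = \<bar>Re (nu j 0)\<bar>" if "j < n" for j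
    using nu_in that unfolding lc_real_def by (simp add: cmod_def)
  then have dom: "\<forall>j. 1 \<le> j \<longrightarrow> j < n \<longrightarrow> cmod (Rep_lf (?N j) 0) < 1"
    using antimono_on_le_first[of n "\<lambda>j. \<bar>Re (nu j 0)\<bar>"] nu_ord nu_dom(2) RN by fastforce
  obtain Y where Y: "\<forall>i<n. (\<forall>k. (\<Sum>j<n. ?N j ^ k * ?W j i) = ?N 0 ^ k * Y k i \<and> supported M (Rep_lf (Y k i))) \<and>
      coeff_conv (\<lambda>k. Rep_lf (Y k i)) (w 0 i)"
    using power_sum_factor_dominant[OF M, of n ?N ?W] nuM wM nu_dom(1) dom n RN RW by auto
  have c: "\<forall>k. supported M (Rep_lf (?N 0 ^ k)) \<and> lc_real (Rep_lf (?N 0 ^ k)) \<and> Re (Rep_lf (?N 0 ^ k) 0) > 0"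
    using supported_power[OF M] lc_real_Rep_lf_power Rep_lf_power_at_0[OF M] nu_dom(1) nuM nu_in RN n
    by simp
  have X: "\<forall>k. \<forall>i<n. (lc_mat_vec n A ^^ k) x i = lc_mult (Rep_lf (?N 0 ^ k)) (Rep_lf (Y k i))"
    using lc_mat_vec_power_eigen[OF A_in _ w_in w_eig x_decomp] nu_in Y by (simp add: times_lf.rep_eq)
  show ?thesis
    by (rule lc_vec_wk_conv_normalize[where y="\<lambda>k i. Rep_lf (Y k i)" and c="\<lambda>k. Rep_lf (?N 0 ^ k)"])
      (use M Y wM w1_nz c X in auto)
qed

end
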